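(* Let $c>0$. There exists $K>1$ such that for all $u>0$ small enough, \[ P^k\big(1_{\{h_k\ge L\}}H\big)\le K e^{-\frac{uL}{\sqrt k}}\|H\|_{L^1(\mu)}, \] uniformly in $L$, in integers $M\ge1$, in $k\ge M^2$, and in functions $H$ satisfying $|H(y)|\le|H(z)|e^{c\theta^{-M}d_\theta(y,z)}$ for all $y,z$ in a common $M$-cylinder.
   Context: $X\subset\mathcal A^{\mathbb N}$ is a one-sided topologically mixing subshift of finite type with shift $f$ and $\mu$ an equilibrium state of a normalized Hölder potential; $h\colon X\to\mathbb Z$ depends only on $x_0$, is $\mu$-centered and non-arithmetic (not cohomologous in $L^2(\mu)$ to a function with values in a proper sublattice); $h_k=\sum_{j<k}h\circ f^j$. $P$ is the transfer operator of $(X,f,\mu)$ ($\int P(G)H\,d\mu=\int G\,H\circ f\,d\mu$). $\theta\in(0,1)$ fixed; $d_\theta(y,z)=\theta^n$ with $n$ the largest integer such that $y_k=z_k$ for $0\le k<n$; $M$-cylinders are sets $\{x':x'_k=a_k,0\le k\le M\}$. *)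

theory Defs
  imports "HOL-Probability.Probability"
begin

definition sft :: "('a \<Rightarrow> 'a \<Rightarrow> bool) \<Rightarrow> (nat \<Rightarrow> 'a) set" where
  "sft A = {x. \<forall>n. A (x n) (x (Suc n))}"

definition shift :: "(nat \<Rightarrow> 'a) \<Rightarrow> (nat \<Rightarrow> 'a)" where
  "shift x = (\<lambda>n. x (Suc n))"

text \<open>Topological mixing, written out on the basis of cylinder sets:
  for nonempty cylinders U, V there is N with f^n(U) meeting V for all n >= N.\<close>
definition topologically_mixing_sft :: "('a \<Rightarrow> 'a \<Rightarrow> bool) \<Rightarrow> bool" where
  "topologically_mixing_sft A \<longleftrightarrow>
     (\<forall>x\<in>sft A. \<forall>y\<in>sft A. \<forall>m::nat. \<exists>N. \<forall>n\<ge>N. \<exists>z\<in>sft A.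
        (\<forall>k\<le>m. z k = x k) \<and> (\<forall>k\<le>m. (shift ^^ n) z k = y k))"

definition dtheta :: "real \<Rightarrow> (nat \<Rightarrow> 'a) \<Rightarrow> (nat \<Rightarrow> 'a) \<Rightarrow> real" where
  "dtheta \<theta> y z = (if y = z then 0 else \<theta> ^ (LEAST n. y n \<noteq> z n))"

definition same_cylinder :: "nat \<Rightarrow> (nat \<Rightarrow> 'a) \<Rightarrow> (nat \<Rightarrow> 'a) \<Rightarrow> bool" where
  "same_cylinder M y z \<longleftrightarrow> (\<forall>k\<le>M. y k = z k)"

definition cylinder_sets :: "('a \<Rightarrow> 'a \<Rightarrow> bool) \<Rightarrow> (nat \<Rightarrow> 'a) set set" where
  "cylinder_sets A = {{x \<in> sft A. \<forall>k\<le>m. x k = w k} | m w. True}"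

definition holder_potential :: "('a \<Rightarrow> 'a \<Rightarrow> bool) \<Rightarrow> real \<Rightarrow> ((nat \<Rightarrow> 'a) \<Rightarrow> real) \<Rightarrow> bool" where
  "holder_potential A \<theta> \<phi> \<longleftrightarrow>
     (\<exists>C \<beta>. \<beta> > 0 \<and> (\<forall>y\<in>sft A. \<forall>z\<in>sft A. \<bar>\<phi> y - \<phi> z\<bar> \<le> C * dtheta \<theta> y z powr \<beta>))"

definition transfer :: "('a \<Rightarrow> 'a \<Rightarrow> bool) \<Rightarrow> ((nat \<Rightarrow> 'a) \<Rightarrow> real)
    \<Rightarrow> ((nat \<Rightarrow> 'a) \<Rightarrow> real) \<Rightarrow> (nat \<Rightarrow> 'a) \<Rightarrow> real" where
  "transfer A \<phi> G x = (\<Sum>y\<in>{y \<in> sft A. shift y = x}. exp (\<phi> y) * G y)"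

definition normalized_potential :: "('a \<Rightarrow> 'a \<Rightarrow> bool) \<Rightarrow> ((nat \<Rightarrow> 'a) \<Rightarrow> real) \<Rightarrow> bool" where
  "normalized_potential A \<phi> \<longleftrightarrow>
     (\<forall>x\<in>sft A. (\<Sum>y\<in>{y \<in> sft A. shift y = x}. exp (\<phi> y)) = 1)"

text \<open>Equilibrium state of a normalized potential: the probability measure on X
  (cylinder sigma-algebra) fixed by the dual of the transfer operator.\<close>
definition equilibrium_state :: "('a \<Rightarrow> 'a \<Rightarrow> bool) \<Rightarrow> ((nat \<Rightarrow> 'a) \<Rightarrow> real)
    \<Rightarrow> (nat \<Rightarrow> 'a) measure \<Rightarrow> bool" where
  "equilibrium_state A \<phi> \<mu> \<longleftrightarrow>
     prob_space \<mu> \<and> space \<mu> = sft A \<and> sets \<mu> = sigma_sets (sft A) (cylinder_sets A) \<and>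
     (\<forall>G \<in> borel_measurable \<mu>. bounded (G ` sft A) \<longrightarrow>
        integral\<^sup>L \<mu> (transfer A \<phi> G) = integral\<^sup>L \<mu> G)"

text \<open>Non-arithmetic: h is not cohomologous in L^2(mu) to a function with values
  in a proper sublattice d*Z (d >= 2) of Z.\<close>
definition non_arithmetic :: "(nat \<Rightarrow> 'a) measure \<Rightarrow> ((nat \<Rightarrow> 'a) \<Rightarrow> int) \<Rightarrow> bool" where
  "non_arithmetic \<mu> h \<longleftrightarrow>
     \<not> (\<exists>d::int. d \<ge> 2 \<and> (\<exists>g u. u \<in> borel_measurable \<mu> \<and> integrable \<mu> (\<lambda>x. (u x)\<^sup>2) \<and>
          (\<forall>x\<in>space \<mu>. \<exists>j::int. g x = real_of_int (d * j)) \<and>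
          (AE x in \<mu>. real_of_int (h x) = g x + u (shift x) - u x)))"

definition birkhoff :: "((nat \<Rightarrow> 'a) \<Rightarrow> int) \<Rightarrow> nat \<Rightarrow> (nat \<Rightarrow> 'a) \<Rightarrow> int" where
  "birkhoff h k x = (\<Sum>j<k. h ((shift ^^ j) x))"

end

theory Submission
  imports Defs
begin

(* Write h_k as a Birkhoff sum of g_k = h + u_k - u_k o f with u_k = sum_{n<k} P^(n+1) h, which is
   bounded since P^n h decays exponentially. Then P g_k = P^(k+1) h is exponentially small, so
   P (exp (t g_k) F) <= exp (t C rho^(k+1) + t^2 B^2) sup F whenever t B <= 1; for t = u / sqrt k
   the k steps cost a bounded factor, and the exponential Chebyshev inequality gives
   exp (- u L / sqrt k). The first M steps cost at most exp (t B M) <= exp B because M <= sqrt k;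
   afterwards P^M |H| is log-Holder at all scales, and mixing gives the Doeblin bound
   P^N F >= delta * integral F for such F, which bounds sup P^M |H| by the integral of |H|.
   Iterating the same Doeblin bound on the cone of log-Holder functions yields the exponential
   decay of P^n h. *)

section \<open>Symbolic dynamics\<close>

lemma funpow_shift: "(shift ^^ n) x = (\<lambda>i. x (i + n))"
  by (induction n arbitrary: x) (auto simp: shift_def funpow_Suc_right)

lemma sft_shift: "x \<in> sft A \<Longrightarrow> shift x \<in> sft A"
  by (simp add: sft_def shift_def)

lemma sft_funpow_shift: "x \<in> sft A \<Longrightarrow> (shift ^^ n) x \<in> sft A"
  by (simp add: sft_def funpow_shift)

lemma sft_case_nat_iff: "x \<in> sft A \<Longrightarrow> case_nat a x \<in> sft A \<longleftrightarrow> A a (x 0)"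
  unfolding sft_def by (auto split: nat.split)

lemma shift_case_nat [simp]: "shift (case_nat a x) = x"
  by (simp add: shift_def)

lemma inj_case_nat: "inj (\<lambda>a. case_nat a x)"
  by (rule injI) (metis old.nat.simps(4))

lemma sft_preimage_eq:
  assumes "x \<in> sft A"
  shows "{y \<in> sft A. shift y = x} = (\<lambda>a. case_nat a x) ` {a. A a (x 0)}"
proof (intro equalityI subsetI)
  fix y assume y: "y \<in> {y \<in> sft A. shift y = x}"
  then have "y = case_nat (y 0) x" by (auto simp: fun_eq_iff shift_def split: nat.split)
  moreover have "A (y 0) (x 0)" using y by (auto simp: sft_def shift_def)
  ultimately show "y \<in> (\<lambda>a. case_nat a x) ` {a. A a (x 0)}" by blast
qed (use sft_case_nat_iff[OF assms] in auto)

lemma finite_sft_preimage: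
  fixes A :: "'a::finite \<Rightarrow> 'a \<Rightarrow> bool"
  shows "x \<in> sft A \<Longrightarrow> finite {y \<in> sft A. shift y = x}"
  by (simp add: sft_preimage_eq)

lemma sum_sft_preimage_eq_sum_letters:
  assumes "x \<in> sft A"
  shows "(\<Sum>y\<in>{y \<in> sft A. shift y = x}. f y) = (\<Sum>a\<in>{a. A a (x 0)}. f (case_nat a x))"
  unfolding sft_preimage_eq[OF assms]
  by (subst sum.reindex) (auto intro: inj_on_subset[OF inj_case_nat])

lemma transfer_eq_sum_letters:
  "x \<in> sft A \<Longrightarrow>
    transfer A \<phi> F x = (\<Sum>a\<in>{a. A a (x 0)}. exp (\<phi> (case_nat a x)) * F (case_nat a x))"
  unfolding transfer_def by (rule sum_sft_preimage_eq_sum_letters)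

lemma sft_concat_preimage:
  assumes z: "\<zeta> \<in> sft A" and x: "x \<in> sft A" and junction: "\<zeta> n = x 0"
  shows "\<exists>y\<in>sft A. (shift ^^ n) y = x \<and> y 0 = \<zeta> 0"
proof -
  define y where "y i = (if i < n then \<zeta> i else x (i - n))" for i
  have "A (y i) (y (Suc i))" for i
  proof (cases "Suc i < n")
    case True then show ?thesis using z by (simp add: y_def sft_def)
  next
    case False
    show ?thesis
    proof (cases "i < n")
      case True
      then have "Suc i = n" using False by simp
      moreover have "A (\<zeta> i) (\<zeta> (Suc i))" using z by (simp add: sft_def)
      ultimately show ?thesis using junction True by (simp add: y_def)
    next
      case False
      then have "Suc i - n = Suc (i - n)" by simp
      then show ?thesis using x False by (simp add: y_def sft_def)
    qed
  qed
  then have "y \<in> sft A" by (simp add: sft_def)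
  moreover have "(shift ^^ n) y = x" by (simp add: funpow_shift y_def)
  moreover have "y 0 = \<zeta> 0" using junction by (cases n) (auto simp: y_def)
  ultimately show ?thesis by blast
qed

lemma mixing_letter_paths:
  assumes "topologically_mixing_sft A" "x \<in> sft A" "z \<in> sft A"
  shows "\<exists>N. \<forall>n\<ge>N. \<exists>\<zeta>\<in>sft A. \<zeta> 0 = z 0 \<and> \<zeta> n = x 0"
proof -
  obtain N where N: "\<forall>n\<ge>N. \<exists>w\<in>sft A. (\<forall>k\<le>0. w k = z k) \<and> (\<forall>k\<le>0. (shift ^^ n) w k = x k)"
    using assms unfolding topologically_mixing_sft_def by blast
  then show ?thesis by (auto simp: funpow_shift)
qed

text \<open>Since the alphabet is finite, the mixing times of all pairs of letters have a common bound.\<close>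
lemma mixing_uniform_preimages:
  fixes A :: "'a::finite \<Rightarrow> 'a \<Rightarrow> bool"
  assumes "topologically_mixing_sft A"
  shows "\<exists>N. \<forall>n\<ge>N. \<forall>x\<in>sft A. \<forall>z\<in>sft A. \<exists>y\<in>sft A. (shift ^^ n) y = x \<and> y 0 = z 0"
proof -
  define good_time where "good_time a b n \<longleftrightarrow>
      (\<forall>x\<in>sft A. \<forall>z\<in>sft A. z 0 = a \<longrightarrow> x 0 = b \<longrightarrow> (\<exists>\<zeta>\<in>sft A. \<zeta> 0 = a \<and> \<zeta> n = b))"
    for a b :: 'a and n
  have "\<exists>N. \<forall>n\<ge>N. good_time a b n" for a b
  proof (cases "\<exists>x\<in>sft A. \<exists>z\<in>sft A. z 0 = a \<and> x 0 = b")
    case True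
    then obtain x z where "x \<in> sft A" "z \<in> sft A" "z 0 = a" "x 0 = b" by blast
    with mixing_letter_paths[OF assms] show ?thesis unfolding good_time_def by metis
  qed (auto simp: good_time_def)
  then obtain Nf where Nf: "\<And>a b n. n \<ge> Nf (a, b) \<Longrightarrow> good_time a b n"
    by (metis case_prod_conv choice)
  have "Nf (a, b) \<le> Max (range Nf)" for a b by (rule Max_ge) auto
  then have "\<forall>n\<ge>Max (range Nf). \<forall>x\<in>sft A. \<forall>z\<in>sft A. \<exists>y\<in>sft A. (shift ^^ n) y = x \<and> y 0 = z 0"
    using Nf sft_concat_preimage unfolding good_time_def by (metis le_trans)
  then show ?thesis by blast
qed

lemma dtheta_nonneg: "0 \<le> \<theta> \<Longrightarrow> 0 \<le> dtheta \<theta> y z"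
  by (simp add: dtheta_def)

lemma dtheta_le_power:
  assumes "0 \<le> \<theta>" "\<theta> \<le> 1" "\<forall>i<r. y i = z i"
  shows "dtheta \<theta> y z \<le> \<theta> ^ r"
proof (cases "y = z")
  case False
  then obtain n where "y n \<noteq> z n" by (auto simp: fun_eq_iff)
  then have "y (LEAST n. y n \<noteq> z n) \<noteq> z (LEAST n. y n \<noteq> z n)" by (rule LeastI)
  then have "r \<le> (LEAST n. y n \<noteq> z n)" using assms(3) by (meson not_le)
  then show ?thesis using False assms by (simp add: dtheta_def power_decreasing)
qed (use assms in \<open>simp add: dtheta_def\<close>)

lemma exp_le_one_plus_self_plus_square:
  fixes s :: real
  assumes "\<bar>s\<bar> \<le> 1"
  shows "exp s \<le> 1 + s + s\<^sup>2"
proof (cases "0 \<le> s")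
  case True then show ?thesis using assms exp_bound[of s] by simp
next
  case False
  define v where "v = - s"
  have v: "0 < v" "v \<le> 1" using False assms by (auto simp: v_def)
  have "1 \<le> (1 + v) * (1 - v + v\<^sup>2)" using v by (simp add: algebra_simps power2_eq_square power3_eq_cube)
  moreover have "exp s * (1 + v) \<le> 1"
    using exp_ge_add_one_self[of v] v by (simp add: v_def exp_minus field_simps)
  ultimately have "exp s * (1 + v) \<le> (1 - v + v\<^sup>2) * (1 + v)" by (simp add: mult.commute)
  then show ?thesis using v by (simp add: v_def)
qed

lemma real_mult_power_le:
  fixes \<rho> :: real
  assumes "0 < \<rho>" "\<rho> < 1"
  shows "real k * \<rho> ^ k \<le> \<rho> / (1 - \<rho>)"
proof -
  define x where "x = 1 / \<rho> - 1"
  have x: "0 < x" "1 + x = 1 / \<rho>" using assms by (simp_all add: x_def field_simps)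
  have "1 + real k * x \<le> (1 + x) ^ k" using x by (intro Bernoulli_inequality) simp
  then have "(1 + real k * x) * \<rho> ^ k \<le> 1" using assms by (simp add: x power_divide field_simps)
  moreover have "0 \<le> \<rho> ^ k" using assms by simp
  ultimately have "real k * \<rho> ^ k * x \<le> 1" by (simp add: algebra_simps)
  then have "real k * \<rho> ^ k \<le> 1 / x" using x by (simp add: field_simps)
  also have "1 / x = \<rho> / (1 - \<rho>)" using assms by (simp add: x_def field_simps)
  finally show ?thesis .
qed

lemma subtract_from_exp_ratio_bound:
  fixes a b d m s :: real
  assumes "0 \<le> d" "0 \<le> m" "0 \<le> s" "a \<le> b * exp (s/2)" "d * m \<le> b"
  shows "a - d/2*m \<le> (b - d/2*m) * exp s"
proof -
  define e where "e = exp (s/2)"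
  have es: "exp s = e * e" unfolding e_def by (simp add: exp_add[symmetric])
  have e1: "1 \<le> e" unfolding e_def using assms(3) by simp
  have "0 \<le> d * m" using assms by simp
  then have "d*m*((e+1)/2) \<le> d*m*e" using e1 by (intro mult_left_mono) auto
  moreover have "d*m*e \<le> b*e" using assms(5) e1 by (intro mult_right_mono) auto
  ultimately have "0 \<le> b*e - d*m*(e+1)/2" by simp
  then have "0 \<le> (e-1)*(b*e - d*m*(e+1)/2)" using e1 by simp
  moreover have "(b - d/2*m)*(e*e) - (a - d/2*m) = (e-1)*(b*e - d*m*(e+1)/2) + (b*e - a)"
    by (simp add: field_simps)
  ultimately show ?thesis unfolding es using assms(4)[folded e_def] by linarith
qed

section \<open>The transfer operator\<close>

locale normalized_sft =
  fixes A :: "'a::finite \<Rightarrow> 'a \<Rightarrow> bool" and \<phi> :: "(nat \<Rightarrow> 'a) \<Rightarrow> real"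
  assumes normalized: "normalized_potential A \<phi>"
begin

abbreviation "X \<equiv> sft A"
abbreviation "P \<equiv> transfer A \<phi>"

lemma sum_exp_letters: "x \<in> X \<Longrightarrow> (\<Sum>a\<in>{a. A a (x 0)}. exp (\<phi> (case_nat a x))) = 1"
  using normalized sum_sft_preimage_eq_sum_letters[of x A "\<lambda>y. exp (\<phi> y)"]
  by (simp add: normalized_potential_def)

lemma potential_le_0: "y \<in> X \<Longrightarrow> \<phi> y \<le> 0"
proof -
  assume y: "y \<in> X"
  then have "exp (\<phi> y) \<le> (\<Sum>z\<in>{z \<in> X. shift z = shift y}. exp (\<phi> z))"
    by (intro member_le_sum finite_sft_preimage sft_shift) auto
  also have "\<dots> = 1" using normalized sft_shift[OF y] by (simp add: normalized_potential_def)
  finally show ?thesis by simp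
qed

lemma transfer_cong: "(\<And>y. y \<in> X \<Longrightarrow> F y = G y) \<Longrightarrow> P F x = P G x"
  unfolding transfer_def by (rule sum.cong) auto

lemma transfer_mono: "(\<And>y. y \<in> X \<Longrightarrow> F y \<le> G y) \<Longrightarrow> P F x \<le> P G x"
  unfolding transfer_def by (rule sum_mono) (auto intro: mult_left_mono)

lemma transfer_nonneg: "(\<And>y. y \<in> X \<Longrightarrow> 0 \<le> F y) \<Longrightarrow> 0 \<le> P F x"
  unfolding transfer_def by (rule sum_nonneg) auto

lemma transfer_const: "x \<in> X \<Longrightarrow> P (\<lambda>_. c) x = c"
  using sum_exp_letters[of x] by (simp add: transfer_eq_sum_letters sum_distrib_right[symmetric])

lemma transfer_add: "P (\<lambda>y. F y + G y) x = P F x + P G x"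
  unfolding transfer_def by (simp add: distrib_left sum.distrib)

lemma transfer_diff: "P (\<lambda>y. F y - G y) x = P F x - P G x"
  unfolding transfer_def by (simp add: right_diff_distrib sum_subtractf)

lemma transfer_cmult: "P (\<lambda>y. c * F y) x = c * P F x"
  unfolding transfer_def by (simp add: sum_distrib_left algebra_simps)

lemma transfer_sum: "P (\<lambda>y. \<Sum>i\<in>I. f i y) x = (\<Sum>i\<in>I. P (f i) x)"
  unfolding transfer_def by (simp add: sum_distrib_left sum.swap[of _ I])

lemma transfer_mult_shift: "P (\<lambda>y. F y * W (shift y)) x = W x * P F x"
proof -
  have "P (\<lambda>y. F y * W (shift y)) x = (\<Sum>y\<in>{y \<in> X. shift y = x}. exp (\<phi> y) * (F y * W x))"
    unfolding transfer_def by (rule sum.cong) auto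
  also have "\<dots> = W x * P F x" unfolding transfer_def by (simp add: sum_distrib_left algebra_simps)
  finally show ?thesis .
qed

lemma transfer_abs_le:
  assumes "\<And>y. y \<in> X \<Longrightarrow> \<bar>F y\<bar> \<le> B" "x \<in> X"
  shows "\<bar>P F x\<bar> \<le> B"
proof -
  have "- B \<le> F y" "F y \<le> B" if "y \<in> X" for y
    using assms(1)[OF that] by (simp_all add: abs_le_iff)
  then have "P F x \<le> P (\<lambda>_. B) x" "P (\<lambda>_. - B) x \<le> P F x"
    by (auto intro!: transfer_mono)
  then show ?thesis using transfer_const[OF assms(2)] by (simp add: abs_le_iff)
qed

lemma transfer_ge_branch:
  assumes "\<And>z. z \<in> X \<Longrightarrow> 0 \<le> F z" "y \<in> X"
  shows "exp (\<phi> y) * F y \<le> P F (shift y)"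
  unfolding transfer_def using assms
  by (intro member_le_sum finite_sft_preimage sft_shift) auto

lemma transfer_power_cong:
  "(\<And>y. y \<in> X \<Longrightarrow> F y = G y) \<Longrightarrow> x \<in> X \<Longrightarrow> (P ^^ n) F x = (P ^^ n) G x"
  by (induction n arbitrary: x) (auto intro!: transfer_cong)

lemma transfer_power_mono:
  "(\<And>y. y \<in> X \<Longrightarrow> F y \<le> G y) \<Longrightarrow> x \<in> X \<Longrightarrow> (P ^^ n) F x \<le> (P ^^ n) G x"
  by (induction n arbitrary: x) (auto intro!: transfer_mono)

lemma transfer_power_const: "x \<in> X \<Longrightarrow> (P ^^ n) (\<lambda>_. c) x = c"
proof (induction n arbitrary: x)
  case (Suc n)
  then have "P ((P ^^ n) (\<lambda>_. c)) x = P (\<lambda>_. c) x" by (intro transfer_cong) auto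
  then show ?case using transfer_const[OF Suc.prems] by simp
qed simp

lemma transfer_power_nonneg:
  "(\<And>y. y \<in> X \<Longrightarrow> 0 \<le> F y) \<Longrightarrow> x \<in> X \<Longrightarrow> 0 \<le> (P ^^ n) F x"
  using transfer_power_mono[of "\<lambda>_. 0" F x n] transfer_power_const by metis

lemma transfer_power_add: "(P ^^ n) (\<lambda>y. F y + G y) = (\<lambda>y. (P ^^ n) F y + (P ^^ n) G y)"
  by (induction n) (auto simp: transfer_add)

lemma transfer_power_cmult: "(P ^^ n) (\<lambda>y. c * F y) = (\<lambda>y. c * (P ^^ n) F y)"
  by (induction n) (auto simp: transfer_cmult)

lemma transfer_power_mult_shift:
  "(P ^^ n) (\<lambda>y. F y * W ((shift ^^ n) y)) = (\<lambda>x. W x * (P ^^ n) F x)"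
proof (induction n arbitrary: F)
  case (Suc n)
  have "(P ^^ Suc n) (\<lambda>y. F y * W ((shift ^^ Suc n) y))
      = (P ^^ n) (P (\<lambda>y. F y * (\<lambda>z. W ((shift ^^ n) z)) (shift y)))"
    by (simp add: funpow_Suc_right del: funpow.simps)
  also have "P (\<lambda>y. F y * (\<lambda>z. W ((shift ^^ n) z)) (shift y)) = (\<lambda>x. P F x * W ((shift ^^ n) x))"
    by (rule ext, subst transfer_mult_shift) (simp add: mult.commute)
  also have "(P ^^ n) \<dots> = (\<lambda>x. W x * (P ^^ n) (P F) x)" by (rule Suc.IH)
  finally show ?case by (simp add: funpow_Suc_right del: funpow.simps)
qed (simp add: mult.commute)

lemma transfer_power_abs_le:
  "(\<And>y. y \<in> X \<Longrightarrow> \<bar>F y\<bar> \<le> B) \<Longrightarrow> x \<in> X \<Longrightarrow> \<bar>(P ^^ n) F x\<bar> \<le> B"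
  by (induction n arbitrary: x) (auto intro!: transfer_abs_le)

lemma transfer_power_ge_branch:
  assumes "\<And>y. y \<in> X \<Longrightarrow> - \<Phi> \<le> \<phi> y" "\<And>z. z \<in> X \<Longrightarrow> 0 \<le> F z" "y \<in> X"
  shows "exp (- (real n * \<Phi>)) * F y \<le> (P ^^ n) F ((shift ^^ n) y)"
  using assms(2,3)
proof (induction n arbitrary: F y)
  case (Suc n)
  have "exp (- \<Phi>) * F y \<le> exp (\<phi> y) * F y"
    using assms(1)[OF Suc.prems(2)] Suc.prems by (intro mult_right_mono) auto
  also have "\<dots> \<le> P F (shift y)" by (rule transfer_ge_branch[OF Suc.prems])
  finally have "exp (- (real n * \<Phi>)) * (exp (- \<Phi>) * F y) \<le> exp (- (real n * \<Phi>)) * P F (shift y)"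
    by simp
  also have "\<dots> \<le> (P ^^ n) (P F) ((shift ^^ n) (shift y))"
    by (rule Suc.IH[OF transfer_nonneg[OF Suc.prems(1)] sft_shift[OF Suc.prems(2)]])
  also have "\<dots> = (P ^^ Suc n) F ((shift ^^ Suc n) y)"
    by (simp only: funpow_Suc_right comp_apply)
  finally show ?case by (simp add: exp_add[symmetric] algebra_simps)
qed simp

text \<open>\<open>P\<close> does not increase the supremum, so decay along multiples of \<open>N\<close> suffices.\<close>
lemma transfer_power_decay_interpolate:
  assumes "0 < N" "0 < q" "q < 1" "0 \<le> C"
    and decay: "\<And>j x. x \<in> X \<Longrightarrow> \<bar>(P ^^ (j * N)) F x\<bar> \<le> C * q ^ j"
    and x: "x \<in> X"
  shows "\<bar>(P ^^ n) F x\<bar> \<le> C / q * root N q ^ n"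
proof -
  define \<rho> where "\<rho> = root N q"
  have \<rho>: "0 < \<rho>" "\<rho> < 1" "\<rho> ^ N = q"
    using assms real_root_less_mono[OF assms(1), of q 1] by (simp_all add: \<rho>_def real_root_pow_pos)
  have "\<rho> ^ n = \<rho> ^ (n div N * N + n mod N)" by simp
  also have "\<dots> = (\<rho> ^ N) ^ (n div N) * \<rho> ^ (n mod N)"
    by (simp only: power_add mult.commute[of "n div N" N] power_mult)
  finally have "\<rho> ^ n = q ^ (n div N) * \<rho> ^ (n mod N)" unfolding \<rho>(3) .
  moreover have "q \<le> \<rho> ^ (n mod N)"
    unfolding \<rho>(3)[symmetric] using \<rho> assms(1) by (intro power_decreasing) auto
  ultimately have "q ^ (n div N) * q \<le> \<rho> ^ n" using assms(2) by (simp add: mult_left_mono)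
  then have qle: "q ^ (n div N) \<le> \<rho> ^ n / q" using assms(2) by (simp add: field_simps)
  have "(P ^^ n) F = (P ^^ (n mod N + n div N * N)) F" by simp
  then have "(P ^^ n) F = (P ^^ (n mod N)) ((P ^^ (n div N * N)) F)"
    by (simp only: funpow_add comp_apply)
  then have "\<bar>(P ^^ n) F x\<bar> \<le> C * q ^ (n div N)" using decay x by (simp add: transfer_power_abs_le)
  also have "\<dots> \<le> C * (\<rho> ^ n / q)" using assms(4) qle by (intro mult_left_mono) auto
  finally show ?thesis by (simp add: \<rho>_def)
qed

end

section \<open>Distortion and the Doeblin cone\<close>

locale holder_sft = normalized_sft A \<phi> for A :: "'a::finite \<Rightarrow> 'a \<Rightarrow> bool" and \<phi> +
  fixes \<theta> C\<^sub>\<phi> \<beta> :: real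
  assumes mixing: "topologically_mixing_sft A"
    and theta: "0 < \<theta>" "\<theta> < 1"
    and beta: "0 < \<beta>" "\<beta> \<le> 1"
    and holder_const: "0 \<le> C\<^sub>\<phi>"
    and holder: "\<And>y z. y \<in> sft A \<Longrightarrow> z \<in> sft A \<Longrightarrow> \<bar>\<phi> y - \<phi> z\<bar> \<le> C\<^sub>\<phi> * dtheta \<theta> y z powr \<beta>"
begin

definition "\<alpha> = \<theta> powr \<beta>"

lemma alpha: "0 < \<alpha>" "\<alpha> < 1" "\<theta> \<le> \<alpha>"
  using theta beta powr_mono'[of \<beta> 1 \<theta>] by (simp_all add: \<alpha>_def powr01_less_one)

lemma distortion:
  assumes "y \<in> X" "z \<in> X" "\<forall>i<r. y i = z i"
  shows "\<bar>\<phi> y - \<phi> z\<bar> \<le> C\<^sub>\<phi> * \<alpha> ^ r"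
proof -
  have "dtheta \<theta> y z powr \<beta> \<le> (\<theta> ^ r) powr \<beta>"
    using dtheta_le_power[of \<theta> r y z] dtheta_nonneg[of \<theta> y z] theta assms beta
    by (intro powr_mono2) auto
  also have "\<dots> = \<alpha> ^ r"
  proof -
    have "\<theta> ^ r = \<theta> powr real r" using theta by (simp add: powr_realpow)
    then show ?thesis using theta by (simp add: \<alpha>_def powr_powr powr_power)
  qed
  finally show ?thesis using holder[OF assms(1,2)] holder_const by (meson mult_left_mono order_trans)
qed

definition "\<Phi> = C\<^sub>\<phi> - \<phi> (SOME x. x \<in> X)"

lemma potential_ge:
  assumes "y \<in> X"
  shows "- \<Phi> \<le> \<phi> y"
proof -
  have "(SOME x. x \<in> X) \<in> X" using assms by (auto simp: some_in_eq)
  from distortion[OF assms this, of 0] show ?thesis by (simp add: \<Phi>_def)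
qed

text \<open>The cone of the Doeblin argument: \<open>\<alpha> ^ r\<close> bounds \<open>dtheta \<theta> y z powr \<beta>\<close> on \<open>r\<close>-cylinders,
  so \<open>log F\<close> is \<open>\<beta>\<close>-Holder with constant \<open>E\<close> at scales finer than \<open>s\<close>.\<close>
definition log_regular :: "((nat \<Rightarrow> 'a) \<Rightarrow> real) \<Rightarrow> real \<Rightarrow> nat \<Rightarrow> bool" where
  "log_regular F E s \<longleftrightarrow> (\<forall>y\<in>X. 0 \<le> F y) \<and>
     (\<forall>r\<ge>s. \<forall>y\<in>X. \<forall>z\<in>X. (\<forall>i<r. y i = z i) \<longrightarrow> F y \<le> F z * exp (E * \<alpha> ^ r))"

lemma log_regular_nonneg: "log_regular F E s \<Longrightarrow> y \<in> X \<Longrightarrow> 0 \<le> F y"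
  by (simp add: log_regular_def)

lemma log_regular_le:
  "log_regular F E s \<Longrightarrow> s \<le> r \<Longrightarrow> y \<in> X \<Longrightarrow> z \<in> X \<Longrightarrow> \<forall>i<r. y i = z i \<Longrightarrow>
    F y \<le> F z * exp (E * \<alpha> ^ r)"
  by (simp add: log_regular_def)

lemma log_regular_mono:
  assumes "log_regular F E s" "s \<le> s'" "E \<le> E'"
  shows "log_regular F E' s'"
  unfolding log_regular_def
proof (intro conjI allI impI ballI)
  fix r y z assume "s' \<le> r" "y \<in> X" "z \<in> X" "\<forall>i<r. y i = z i"
  then have "F y \<le> F z * exp (E * \<alpha> ^ r)" using assms by (meson le_trans log_regular_le)
  also have "\<dots> \<le> F z * exp (E' * \<alpha> ^ r)"
    using assms \<open>z \<in> X\<close> alpha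
    by (intro mult_left_mono log_regular_nonneg) (auto intro!: mult_right_mono)
  finally show "F y \<le> F z * exp (E' * \<alpha> ^ r)" .
qed (use assms log_regular_nonneg in auto)

lemma log_regular_transfer:
  assumes "1 \<le> s" "log_regular F E (Suc s)"
  shows "log_regular (P F) (\<alpha> * (C\<^sub>\<phi> + E)) s"
  unfolding log_regular_def
proof (intro conjI allI impI ballI)
  fix y show "0 \<le> P F y" using assms(2) by (intro transfer_nonneg log_regular_nonneg)
next
  fix r x x' assume r: "s \<le> r" and x: "x \<in> X" and x': "x' \<in> X" and agree: "\<forall>i<r. x i = x' i"
  have x0: "x' 0 = x 0" using agree r assms(1) by auto
  have "exp (\<phi> (case_nat a x)) * F (case_nat a x) \<le>
      exp (\<phi> (case_nat a x')) * F (case_nat a x') * exp (\<alpha> * (C\<^sub>\<phi> + E) * \<alpha> ^ r)"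
    if a: "A a (x 0)" for a
  proof -
    have ax: "case_nat a x \<in> X" and ax': "case_nat a x' \<in> X"
      using a x0 sft_case_nat_iff[OF x] sft_case_nat_iff[OF x'] by simp_all
    have agree': "\<forall>i<Suc r. case_nat a x i = case_nat a x' i" using agree by (auto split: nat.split)
    have "\<phi> (case_nat a x) \<le> \<phi> (case_nat a x') + C\<^sub>\<phi> * \<alpha> ^ Suc r"
      using distortion[OF ax ax' agree'] by simp
    moreover have "F (case_nat a x) \<le> F (case_nat a x') * exp (E * \<alpha> ^ Suc r)"
      using assms(2) ax ax' agree' r by (intro log_regular_le) auto
    ultimately have "exp (\<phi> (case_nat a x)) * F (case_nat a x)
        \<le> exp (\<phi> (case_nat a x') + C\<^sub>\<phi> * \<alpha> ^ Suc r) * (F (case_nat a x') * exp (E * \<alpha> ^ Suc r))"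
      using log_regular_nonneg[OF assms(2) ax] by (intro mult_mono) auto
    then show ?thesis by (simp add: exp_add[symmetric] algebra_simps)
  qed
  then have "P F x \<le> (\<Sum>a\<in>{a. A a (x 0)}.
      exp (\<phi> (case_nat a x')) * F (case_nat a x') * exp (\<alpha> * (C\<^sub>\<phi> + E) * \<alpha> ^ r))"
    unfolding transfer_eq_sum_letters[OF x] by (intro sum_mono) auto
  also have "\<dots> = P F x' * exp (\<alpha> * (C\<^sub>\<phi> + E) * \<alpha> ^ r)"
    unfolding transfer_eq_sum_letters[OF x'] x0 by (simp add: sum_distrib_right)
  finally show "P F x \<le> P F x' * exp (\<alpha> * (C\<^sub>\<phi> + E) * \<alpha> ^ r)" .
qed

text \<open>The fixed point of \<open>E \<mapsto> \<alpha> * (C\<^sub>\<phi> + E)\<close>.\<close>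
definition "D = C\<^sub>\<phi> * \<alpha> / (1 - \<alpha>)"

lemma D_nonneg: "0 \<le> D"
  using holder_const alpha by (simp add: D_def)

lemma log_regular_transfer_power:
  assumes "1 \<le> s" "log_regular F E (s + j)"
  shows "log_regular ((P ^^ j) F) (\<alpha> ^ j * E + D) s"
  using assms
proof (induction j arbitrary: s)
  case 0 then show ?case using D_nonneg by (auto intro: log_regular_mono)
next
  case (Suc j)
  then have "log_regular ((P ^^ j) F) (\<alpha> ^ j * E + D) (Suc s)" by simp
  then have "log_regular (P ((P ^^ j) F)) (\<alpha> * (C\<^sub>\<phi> + (\<alpha> ^ j * E + D))) s"
    using Suc.prems(1) by (intro log_regular_transfer)
  moreover have "\<alpha> * (C\<^sub>\<phi> + (\<alpha> ^ j * E + D)) = \<alpha> ^ Suc j * E + D"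
    using alpha by (simp add: D_def field_simps)
  ultimately show ?case by simp
qed

definition "N\<^sub>m\<^sub>i\<^sub>x = (SOME N. \<forall>n\<ge>N. \<forall>x\<in>X. \<forall>z\<in>X. \<exists>y\<in>X. (shift ^^ n) y = x \<and> y 0 = z 0)"

lemma mixing_time: "N\<^sub>m\<^sub>i\<^sub>x \<le> n \<Longrightarrow> x \<in> X \<Longrightarrow> z \<in> X \<Longrightarrow> \<exists>y\<in>X. (shift ^^ n) y = x \<and> y 0 = z 0"
  using someI_ex[OF mixing_uniform_preimages[OF mixing]] unfolding N\<^sub>m\<^sub>i\<^sub>x_def by blast

lemma doeblin_lower_bound:
  assumes F: "log_regular F E 1" and n: "N\<^sub>m\<^sub>i\<^sub>x \<le> n" and x: "x \<in> X" and z: "z \<in> X"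
  shows "exp (- (real n * \<Phi> + E * \<alpha>)) * F z \<le> (P ^^ n) F x"
proof -
  obtain y where y: "y \<in> X" "(shift ^^ n) y = x" "y 0 = z 0" using mixing_time[OF n x z] by blast
  have "F z \<le> F y * exp (E * \<alpha>)" using F z y by (intro log_regular_le[where r = 1, simplified]) auto
  then have "exp (- (E * \<alpha>)) * F z \<le> exp (- (E * \<alpha>)) * (F y * exp (E * \<alpha>))" by simp
  also have "\<dots> = F y" by (simp add: exp_minus field_simps)
  finally have "exp (- (E * \<alpha>)) * F z \<le> F y" .
  then have "exp (- (real n * \<Phi>)) * (exp (- (E * \<alpha>)) * F z) \<le> exp (- (real n * \<Phi>)) * F y"
    by simp
  also have "\<dots> \<le> (P ^^ n) F x"
    using transfer_power_ge_branch[of \<Phi> F y n] potential_ge log_regular_nonneg[OF F] y by simp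
  finally show ?thesis by (simp add: exp_add[symmetric] algebra_simps)
qed

end

locale sft_equilibrium = holder_sft A \<phi> \<theta> C\<^sub>\<phi> \<beta>
  for A :: "'a::finite \<Rightarrow> 'a \<Rightarrow> bool" and \<phi> \<theta> C\<^sub>\<phi> \<beta> +
  fixes \<mu> :: "(nat \<Rightarrow> 'a) measure"
  assumes equilibrium: "equilibrium_state A \<phi> \<mu>"
begin

lemma prob_space_mu: "prob_space \<mu>"
  using equilibrium by (simp add: equilibrium_state_def)

lemma space_mu: "space \<mu> = X"
  using equilibrium by (simp add: equilibrium_state_def)

lemma sets_mu: "sets \<mu> = sigma_sets X (cylinder_sets A)"
  using equilibrium by (simp add: equilibrium_state_def)

lemma Phi_nonneg: "0 \<le> \<Phi>"
  using prob_space.not_empty[OF prob_space_mu] potential_ge potential_le_0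
  by (fastforce simp: space_mu)

lemma initial_segment_determined_set_in_sets:
  assumes "\<And>x y. \<forall>i\<le>m. x i = y i \<Longrightarrow> Q x = Q y"
  shows "{x \<in> X. Q x} \<in> sets \<mu>"
proof -
  define cyl where "cyl w = {x \<in> X. \<forall>k\<le>m. x k = w k}" for w
  define S where "S = {x \<in> X. Q x}"
  have "S = \<Union> (cyl ` S)"
  proof (intro equalityI subsetI)
    fix x assume "x \<in> S"
    then show "x \<in> \<Union> (cyl ` S)" by (auto simp: cyl_def S_def)
  next
    fix x assume "x \<in> \<Union> (cyl ` S)"
    then obtain w where w: "w \<in> S" "x \<in> cyl w" by blast
    then have "Q x = Q w" by (intro assms) (simp add: cyl_def)
    then show "x \<in> S" using w by (simp add: S_def cyl_def)
  qed
  moreover have "cyl ` S \<subseteq> cyl ` ({..m} \<rightarrow>\<^sub>E UNIV)"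
  proof
    fix Y assume "Y \<in> cyl ` S"
    then obtain w where "Y = cyl w" by blast
    moreover have "cyl w = cyl (restrict w {..m})" unfolding cyl_def by simp
    ultimately show "Y \<in> cyl ` ({..m} \<rightarrow>\<^sub>E UNIV)" by auto
  qed
  then have "finite (cyl ` S)" by (rule finite_subset) (intro finite_imageI finite_PiE; simp)
  moreover have "cyl ` S \<subseteq> sets \<mu>"
    unfolding cyl_def sets_mu cylinder_sets_def by (auto intro: sigma_sets.Basic)
  ultimately show ?thesis unfolding S_def[symmetric] by (metis sets.finite_Union)
qed

lemma initial_segment_determined_measurable:
  fixes G :: "(nat \<Rightarrow> 'a) \<Rightarrow> real"
  assumes "\<And>x y. \<forall>i\<le>m. x i = y i \<Longrightarrow> G x = G y"
  shows "G \<in> borel_measurable \<mu>"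
proof (rule measurableI)
  fix B :: "real set"
  have "G -` B \<inter> space \<mu> = {x \<in> X. G x \<in> B}" using space_mu by auto
  also have "\<dots> \<in> sets \<mu>"
    by (rule initial_segment_determined_set_in_sets[of m]) (metis assms)
  finally show "G -` B \<inter> space \<mu> \<in> sets \<mu>" .
qed auto

text \<open>\<open>\<phi>\<close> is the uniform limit of its values at chosen points of the \<open>m\<close>-cylinders.\<close>
lemma potential_measurable: "\<phi> \<in> borel_measurable \<mu>"
proof (rule borel_measurable_LIMSEQ_real)
  define \<sigma> where "\<sigma> m x = (SOME z. z \<in> X \<and> (\<forall>k\<le>m. z k = x k))" for m x
  show "(\<lambda>x. \<phi> (\<sigma> m x)) \<in> borel_measurable \<mu>" for m
  proof (rule initial_segment_determined_measurable[of m])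
    fix x y :: "nat \<Rightarrow> 'a" assume "\<forall>i\<le>m. x i = y i"
    then have "(\<lambda>z. z \<in> X \<and> (\<forall>k\<le>m. z k = x k)) = (\<lambda>z. z \<in> X \<and> (\<forall>k\<le>m. z k = y k))" by auto
    then show "\<phi> (\<sigma> m x) = \<phi> (\<sigma> m y)" by (simp add: \<sigma>_def)
  qed
  fix x assume "x \<in> space \<mu>"
  then have x: "x \<in> X" using space_mu by simp
  have "\<sigma> m x \<in> X \<and> (\<forall>k\<le>m. \<sigma> m x k = x k)" for m
    unfolding \<sigma>_def by (rule someI[of _ x]) (simp add: x)
  then have "norm (\<phi> (\<sigma> m x) - \<phi> x) \<le> C\<^sub>\<phi> * \<alpha> ^ Suc m" for m
    using distortion[of "\<sigma> m x" x "Suc m"] x by (simp add: less_Suc_eq_le)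
  then have ev: "\<forall>\<^sub>F m in sequentially. norm (\<phi> (\<sigma> m x) - \<phi> x) \<le> C\<^sub>\<phi> * \<alpha> ^ Suc m" by simp
  have "(\<lambda>m. \<alpha> ^ Suc m) \<longlonglongrightarrow> 0"
    using LIMSEQ_Suc[OF LIMSEQ_power_zero[of \<alpha>]] alpha by simp
  then have "(\<lambda>m. C\<^sub>\<phi> * \<alpha> ^ Suc m) \<longlonglongrightarrow> 0" by (rule tendsto_mult_right_zero)
  with ev have "(\<lambda>m. \<phi> (\<sigma> m x) - \<phi> x) \<longlonglongrightarrow> 0" by (rule Lim_null_comparison)
  then show "(\<lambda>m. \<phi> (\<sigma> m x)) \<longlonglongrightarrow> \<phi> x" by (simp add: LIM_zero_iff)
qed

lemma case_nat_measurable: "case_nat a \<in> restrict_space \<mu> {x. A a (x 0)} \<rightarrow>\<^sub>M \<mu>"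
proof (rule measurable_sigma_sets[OF sets_mu])
  show "cylinder_sets A \<subseteq> Pow X" by (auto simp: cylinder_sets_def)
  show "case_nat a \<in> space (restrict_space \<mu> {x. A a (x 0)}) \<rightarrow> X"
    by (auto simp: space_restrict_space space_mu sft_case_nat_iff)
  fix Y assume "Y \<in> cylinder_sets A"
  then obtain m w where Y: "Y = {x \<in> X. \<forall>k\<le>m. x k = w k}" by (auto simp: cylinder_sets_def)
  have "{x \<in> X. A a (x 0)} \<in> sets \<mu>" by (rule initial_segment_determined_set_in_sets[of 0]) auto
  then have start: "{x. A a (x 0)} \<inter> space \<mu> \<in> sets \<mu>" by (simp add: space_mu Int_commute Collect_conj_eq)
  have "case_nat a -` Y \<inter> space (restrict_space \<mu> {x. A a (x 0)}) =
      {x \<in> X. A a (x 0) \<and> (\<forall>k\<le>m. case_nat a x k = w k)}"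
    by (auto simp: space_restrict_space space_mu Y sft_case_nat_iff)
  moreover have "{x \<in> X. A a (x 0) \<and> (\<forall>k\<le>m. case_nat a x k = w k)} \<in> sets \<mu>"
  proof (rule initial_segment_determined_set_in_sets[of m])
    fix x y :: "nat \<Rightarrow> 'a" assume agree: "\<forall>i\<le>m. x i = y i"
    then have "case_nat a x k = case_nat a y k" if "k \<le> m" for k
      using that by (cases k) auto
    then show "(A a (x 0) \<and> (\<forall>k\<le>m. case_nat a x k = w k)) = (A a (y 0) \<and> (\<forall>k\<le>m. case_nat a y k = w k))"
      using agree by auto
  qed
  ultimately show "case_nat a -` Y \<inter> space (restrict_space \<mu> {x. A a (x 0)})
      \<in> sets (restrict_space \<mu> {x. A a (x 0)})"
    by (subst sets_restrict_space_iff[OF start]) auto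
qed

lemma transfer_measurable:
  assumes G: "G \<in> borel_measurable \<mu>"
  shows "P G \<in> borel_measurable \<mu>"
proof -
  define S where "S x = (\<Sum>a\<in>UNIV.
      if A a (x 0) then exp (\<phi> (case_nat a x)) * G (case_nat a x) else 0)" for x
  have E: "(\<lambda>y. exp (\<phi> y) * G y) \<in> borel_measurable \<mu>"
    by (rule borel_measurable_times[OF measurable_compose[OF potential_measurable borel_measurable_exp] G])
  have "S \<in> borel_measurable \<mu>" unfolding S_def
  proof (rule borel_measurable_sum)
    fix a
    have start: "{x \<in> space \<mu>. A a (x 0)} \<in> sets \<mu>"
      unfolding space_mu by (rule initial_segment_determined_set_in_sets[of 0]) auto
    then show "(\<lambda>x. if A a (x 0) then exp (\<phi> (case_nat a x)) * G (case_nat a x) else 0) \<in> borel_measurable \<mu>"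
      unfolding measurable_If_restrict_space_iff[OF start]
      using measurable_comp[OF case_nat_measurable E] by (simp add: o_def)
  qed
  moreover have "P G x = S x" if "x \<in> space \<mu>" for x
    using that by (simp add: space_mu transfer_eq_sum_letters S_def sum.If_cases)
  ultimately show ?thesis using measurable_cong by blast
qed

definition bounded_measurable :: "((nat \<Rightarrow> 'a) \<Rightarrow> real) \<Rightarrow> bool" where
  "bounded_measurable F \<longleftrightarrow> F \<in> borel_measurable \<mu> \<and> (\<exists>B. \<forall>x\<in>X. \<bar>F x\<bar> \<le> B)"

lemma bounded_measurable_transfer: "bounded_measurable F \<Longrightarrow> bounded_measurable (P F)"
  unfolding bounded_measurable_def using transfer_measurable transfer_abs_le by blast

lemma bounded_measurable_transfer_power: "bounded_measurable F \<Longrightarrow> bounded_measurable ((P ^^ n) F)"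
  by (induction n) (auto intro: bounded_measurable_transfer)

lemma bounded_measurable_const: "bounded_measurable (\<lambda>_. c)"
  unfolding bounded_measurable_def by auto

lemma bounded_measurable_add:
  assumes "bounded_measurable F" "bounded_measurable G"
  shows "bounded_measurable (\<lambda>x. F x + G x)"
proof -
  obtain B\<^sub>F B\<^sub>G where "\<forall>x\<in>X. \<bar>F x\<bar> \<le> B\<^sub>F" "\<forall>x\<in>X. \<bar>G x\<bar> \<le> B\<^sub>G"
    using assms by (auto simp: bounded_measurable_def)
  then have "\<forall>x\<in>X. \<bar>F x + G x\<bar> \<le> B\<^sub>F + B\<^sub>G" by (smt (verit) abs_triangle_ineq)
  then show ?thesis using assms by (auto simp: bounded_measurable_def)
qed

lemma bounded_measurable_diff:
  assumes "bounded_measurable F" "bounded_measurable G"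
  shows "bounded_measurable (\<lambda>x. F x - G x)"
proof -
  obtain B\<^sub>F B\<^sub>G where "\<forall>x\<in>X. \<bar>F x\<bar> \<le> B\<^sub>F" "\<forall>x\<in>X. \<bar>G x\<bar> \<le> B\<^sub>G"
    using assms by (auto simp: bounded_measurable_def)
  then have "\<forall>x\<in>X. \<bar>F x - G x\<bar> \<le> B\<^sub>F + B\<^sub>G" by (smt (verit) abs_triangle_ineq4)
  then show ?thesis using assms by (auto simp: bounded_measurable_def)
qed

lemma bounded_measurable_integrable: "bounded_measurable F \<Longrightarrow> integrable \<mu> F"
  unfolding bounded_measurable_def
proof (elim conjE exE)
  fix B assume "F \<in> borel_measurable \<mu>" "\<forall>x\<in>X. \<bar>F x\<bar> \<le> B"
  then show "integrable \<mu> F"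
    using prob_space.axioms(1)[OF prob_space_mu] space_mu
    by (intro finite_measure.integrable_const_bound[of \<mu> F B]) (auto intro: AE_I2)
qed

lemma integral_const_mu: "integral\<^sup>L \<mu> (\<lambda>_. c) = (c::real)"
  using prob_space.prob_space[OF prob_space_mu] by simp

lemma integral_transfer: "bounded_measurable F \<Longrightarrow> integral\<^sup>L \<mu> (P F) = integral\<^sup>L \<mu> F"
  using equilibrium unfolding equilibrium_state_def bounded_measurable_def bounded_iff by auto

lemma integral_transfer_power:
  "bounded_measurable F \<Longrightarrow> integral\<^sup>L \<mu> ((P ^^ n) F) = integral\<^sup>L \<mu> F"
  by (induction n) (simp_all add: integral_transfer bounded_measurable_transfer_power)

lemma integral_le_const:
  assumes "bounded_measurable F" "\<And>x. x \<in> X \<Longrightarrow> F x \<le> c"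
  shows "integral\<^sup>L \<mu> F \<le> c"
proof -
  have "integral\<^sup>L \<mu> F \<le> integral\<^sup>L \<mu> (\<lambda>_. c)"
    using assms space_mu
    by (intro integral_mono_AE bounded_measurable_integrable bounded_measurable_const AE_I2) auto
  then show ?thesis by (simp only: integral_const_mu)
qed

lemma integral_ge_const:
  assumes "bounded_measurable F" "\<And>x. x \<in> X \<Longrightarrow> c \<le> F x"
  shows "c \<le> integral\<^sup>L \<mu> F"
proof -
  have "integral\<^sup>L \<mu> (\<lambda>_. c) \<le> integral\<^sup>L \<mu> F"
    using assms space_mu
    by (intro integral_mono_AE bounded_measurable_integrable bounded_measurable_const AE_I2) auto
  then show ?thesis by (simp only: integral_const_mu)
qed

section \<open>Doeblin contraction and exponential decay\<close>

lemma log_regular_le_integral: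
  assumes F: "log_regular F E 1" "bounded_measurable F" and y: "y \<in> X"
  shows "F y \<le> exp (real N\<^sub>m\<^sub>i\<^sub>x * \<Phi> + E * \<alpha>) * integral\<^sup>L \<mu> F"
proof -
  define a where "a = real N\<^sub>m\<^sub>i\<^sub>x * \<Phi> + E * \<alpha>"
  have "exp (- a) * F y \<le> integral\<^sup>L \<mu> ((P ^^ N\<^sub>m\<^sub>i\<^sub>x) F)"
    unfolding a_def using F y
    by (intro integral_ge_const bounded_measurable_transfer_power doeblin_lower_bound) auto
  then have "exp a * (exp (- a) * F y) \<le> exp a * integral\<^sup>L \<mu> F"
    unfolding integral_transfer_power[OF F(2)] by (intro mult_left_mono) auto
  then show ?thesis by (simp add: a_def[symmetric] mult.assoc[symmetric] exp_minus_inverse)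
qed

definition "N\<^sub>D = N\<^sub>m\<^sub>i\<^sub>x + (SOME n. \<alpha> ^ n < 1/4) + 1"
definition "E\<^sub>D = 4 * D + 1"
definition "\<delta> = exp (- (real N\<^sub>D * \<Phi> + E\<^sub>D * \<alpha>))"
definition "q = 1 - \<delta> / 2"

text \<open>On the cone \<open>log_regular _ E\<^sub>D 1\<close> the Doeblin bound gives \<open>P ^^ N\<^sub>D G \<ge> \<delta> * \<integral>G\<close>;
  removing half of this mass keeps the function in the cone and multiplies its integral by \<open>q\<close>.\<close>
definition "doeblin_op G = (\<lambda>x. (P ^^ N\<^sub>D) G x - \<delta> / 2 * integral\<^sup>L \<mu> G)"

lemma N_D: "N\<^sub>m\<^sub>i\<^sub>x \<le> N\<^sub>D" "0 < N\<^sub>D" "\<alpha> ^ N\<^sub>D \<le> 1/4"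
proof -
  have "\<exists>n. \<alpha> ^ n < 1/4" using alpha by (intro real_arch_pow_inv) auto
  then have "\<alpha> ^ (SOME n. \<alpha> ^ n < 1/4) < 1/4" by (rule someI_ex)
  moreover have "\<alpha> ^ N\<^sub>D \<le> \<alpha> ^ (SOME n. \<alpha> ^ n < 1/4)"
    using alpha by (intro power_decreasing) (auto simp: N\<^sub>D_def)
  ultimately show "\<alpha> ^ N\<^sub>D \<le> 1/4" by simp
qed (simp_all add: N\<^sub>D_def)

lemma E_D_pos: "0 < E\<^sub>D"
  using D_nonneg by (simp add: E\<^sub>D_def)

lemma delta: "0 < \<delta>" "\<delta> \<le> 1"
proof -
  have "0 \<le> real N\<^sub>D * \<Phi>" "0 \<le> E\<^sub>D * \<alpha>" using Phi_nonneg E_D_pos alpha by simp_all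
  then show "0 < \<delta>" "\<delta> \<le> 1" by (simp_all add: \<delta>_def)
qed

lemma q: "0 < q" "q < 1"
  using delta by (simp_all add: q_def)

lemma doeblin_step:
  assumes G: "bounded_measurable G" "log_regular G E\<^sub>D 1"
  shows "bounded_measurable (doeblin_op G)" "log_regular (doeblin_op G) E\<^sub>D 1"
    "integral\<^sup>L \<mu> (doeblin_op G) = q * integral\<^sup>L \<mu> G"
proof -
  define m where "m = integral\<^sup>L \<mu> G"
  have m: "0 \<le> m" unfolding m_def using G by (intro integral_ge_const log_regular_nonneg)
  show "bounded_measurable (doeblin_op G)" unfolding doeblin_op_def
    using G by (intro bounded_measurable_diff bounded_measurable_transfer_power bounded_measurable_const)
  have "integral\<^sup>L \<mu> (doeblin_op G) = integral\<^sup>L \<mu> ((P ^^ N\<^sub>D) G) - integral\<^sup>L \<mu> (\<lambda>_. \<delta> / 2 * m)"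
    unfolding doeblin_op_def m_def using G
    by (intro Bochner_Integration.integral_diff bounded_measurable_integrable
        bounded_measurable_transfer_power bounded_measurable_const)
  then show "integral\<^sup>L \<mu> (doeblin_op G) = q * integral\<^sup>L \<mu> G"
    unfolding integral_const_mu integral_transfer_power[OF G(1)] m_def by (simp add: q_def algebra_simps)
  have reg: "log_regular ((P ^^ N\<^sub>D) G) (\<alpha> ^ N\<^sub>D * E\<^sub>D + D) 1"
    using G by (intro log_regular_transfer_power) (auto intro: log_regular_mono)
  have "\<alpha> ^ N\<^sub>D * E\<^sub>D \<le> 1/4 * E\<^sub>D" using N_D(3) E_D_pos by (intro mult_right_mono) auto
  then have "\<alpha> ^ N\<^sub>D * E\<^sub>D + D \<le> 1/4 * E\<^sub>D + D" by (rule add_right_mono)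
  also have "\<dots> \<le> E\<^sub>D / 2" by (simp add: E\<^sub>D_def)
  finally have half: "log_regular ((P ^^ N\<^sub>D) G) (E\<^sub>D / 2) 1"
    by (rule log_regular_mono[OF reg order_refl])
  have lower: "\<delta> * m \<le> (P ^^ N\<^sub>D) G z" if z: "z \<in> X" for z
  proof -
    have "G y \<le> (P ^^ N\<^sub>D) G z / \<delta>" if "y \<in> X" for y
      using doeblin_lower_bound[OF G(2) N_D(1) z that] delta by (simp add: \<delta>_def field_simps)
    then have "m \<le> (P ^^ N\<^sub>D) G z / \<delta>" unfolding m_def by (rule integral_le_const[OF G(1)])
    then show ?thesis using delta by (simp add: field_simps)
  qed
  show "log_regular (doeblin_op G) E\<^sub>D 1" unfolding log_regular_def
  proof (intro conjI ballI allI impI)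
    fix y assume "y \<in> X"
    moreover have "0 \<le> \<delta> * m" using delta m by simp
    ultimately show "0 \<le> doeblin_op G y"
      using lower[of y] unfolding doeblin_op_def m_def[symmetric] by simp
  next
    fix r y z assume "1 \<le> r" "y \<in> X" "z \<in> X" "\<forall>i<r. y i = z i"
    then have "(P ^^ N\<^sub>D) G y \<le> (P ^^ N\<^sub>D) G z * exp (E\<^sub>D * \<alpha> ^ r / 2)"
      using log_regular_le[OF half] by auto
    moreover have "0 \<le> E\<^sub>D * \<alpha> ^ r" using E_D_pos alpha by simp
    ultimately show "doeblin_op G y \<le> doeblin_op G z * exp (E\<^sub>D * \<alpha> ^ r)"
      using subtract_from_exp_ratio_bound[of \<delta> m] delta m lower[OF \<open>z \<in> X\<close>]
      unfolding doeblin_op_def m_def[symmetric] by simp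
  qed
qed

lemma doeblin_iterate:
  assumes F: "bounded_measurable F" "log_regular F E\<^sub>D 1"
  shows "bounded_measurable ((doeblin_op ^^ j) F) \<and> log_regular ((doeblin_op ^^ j) F) E\<^sub>D 1 \<and>
    integral\<^sup>L \<mu> ((doeblin_op ^^ j) F) = q ^ j * integral\<^sup>L \<mu> F \<and>
    (\<forall>x\<in>X. (P ^^ (j * N\<^sub>D)) F x = (doeblin_op ^^ j) F x + (1 - q ^ j) * integral\<^sup>L \<mu> F)"
proof (induction j)
  case (Suc j)
  define G where "G = (doeblin_op ^^ j) F"
  define m where "m = integral\<^sup>L \<mu> F"
  have G: "bounded_measurable G" "log_regular G E\<^sub>D 1" "integral\<^sup>L \<mu> G = q ^ j * m"
    and split: "\<And>x. x \<in> X \<Longrightarrow> (P ^^ (j * N\<^sub>D)) F x = G x + (1 - q ^ j) * m"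
    using Suc unfolding G_def m_def by auto
  have "(P ^^ (Suc j * N\<^sub>D)) F x = doeblin_op G x + (1 - q ^ Suc j) * m" if x: "x \<in> X" for x
  proof -
    have "(P ^^ (Suc j * N\<^sub>D)) F x = (P ^^ N\<^sub>D) ((P ^^ (j * N\<^sub>D)) F) x" by (simp add: funpow_add)
    also have "\<dots> = (P ^^ N\<^sub>D) (\<lambda>y. G y + (1 - q ^ j) * m) x"
      by (rule transfer_power_cong[OF split x])
    also have "\<dots> = doeblin_op G x + \<delta> / 2 * (q ^ j * m) + (1 - q ^ j) * m"
      by (simp add: transfer_power_add transfer_power_const[OF x] doeblin_op_def G(3))
    also have "\<dots> = doeblin_op G x + (1 - q ^ Suc j) * m" by (simp add: q_def algebra_simps)
    finally show ?thesis .
  qed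
  then show ?case using doeblin_step[OF G(1,2)] G(3) unfolding G_def m_def by simp
qed (use F in simp)

lemma log_regular_transfer_power_decay:
  assumes F: "bounded_measurable F" "log_regular F E\<^sub>D 1" and x: "x \<in> X"
  shows "\<bar>(P ^^ (j * N\<^sub>D)) F x - integral\<^sup>L \<mu> F\<bar>
    \<le> (exp (real N\<^sub>m\<^sub>i\<^sub>x * \<Phi> + E\<^sub>D * \<alpha>) + 1) * q ^ j * integral\<^sup>L \<mu> F"
proof -
  define G where "G = (doeblin_op ^^ j) F"
  define m where "m = integral\<^sup>L \<mu> F"
  have G: "bounded_measurable G" "log_regular G E\<^sub>D 1" "integral\<^sup>L \<mu> G = q ^ j * m"
    and split: "(P ^^ (j * N\<^sub>D)) F x = G x + (1 - q ^ j) * m"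
    using doeblin_iterate[OF F, of j] x unfolding G_def m_def by auto
  have "0 \<le> m" unfolding m_def using F by (intro integral_ge_const log_regular_nonneg)
  then have "0 \<le> q ^ j * m" using q by simp
  moreover have "0 \<le> G x" "G x \<le> exp (real N\<^sub>m\<^sub>i\<^sub>x * \<Phi> + E\<^sub>D * \<alpha>) * (q ^ j * m)"
    using log_regular_nonneg[OF G(2) x] log_regular_le_integral[OF G(2,1) x] G(3) by simp_all
  ultimately show ?thesis unfolding split m_def[symmetric] by (simp add: abs_le_iff algebra_simps)
qed

lemma transfer_power_decay_first_coordinate:
  fixes h :: "'a \<Rightarrow> real"
  assumes centered: "integral\<^sup>L \<mu> (\<lambda>x. h (x 0)) = 0"
  shows "\<exists>K \<rho>. 0 < \<rho> \<and> \<rho> < 1 \<and> 0 \<le> K \<and>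
    (\<forall>n. \<forall>x\<in>X. \<bar>(P ^^ n) (\<lambda>x. h (x 0)) x\<bar> \<le> K * \<rho> ^ n)"
proof -
  define c where "c = (\<Sum>a\<in>UNIV. \<bar>h a\<bar>)"
  have h_le: "\<bar>h a\<bar> \<le> c" for a unfolding c_def by (rule member_le_sum) auto
  have h: "bounded_measurable (\<lambda>x. h (x 0))"
    unfolding bounded_measurable_def using h_le
    by (auto intro: initial_segment_determined_measurable[of 0])
  define F where "F = (\<lambda>x::nat \<Rightarrow> 'a. h (x 0) + c)"
  have F: "bounded_measurable F" unfolding F_def by (intro bounded_measurable_add h bounded_measurable_const)
  have F_nonneg: "0 \<le> F x" for x using h_le[of "x 0"] by (simp add: F_def abs_le_iff)
  have "log_regular F E\<^sub>D 1" unfolding log_regular_def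
  proof (intro conjI ballI allI impI)
    fix r y z assume "1 \<le> r" "y \<in> X" "z \<in> X" "\<forall>i<r. y i = z i"
    then have "F y = F z" by (simp add: F_def)
    moreover have "1 \<le> exp (E\<^sub>D * \<alpha> ^ r)" using E_D_pos alpha by simp
    ultimately show "F y \<le> F z * exp (E\<^sub>D * \<alpha> ^ r)" using F_nonneg[of z] by (simp add: mult_le_cancel_left1)
  qed (rule F_nonneg)
  moreover have "integral\<^sup>L \<mu> F = c"
    unfolding F_def using centered
      Bochner_Integration.integral_add[OF bounded_measurable_integrable[OF h]
        bounded_measurable_integrable[OF bounded_measurable_const]]
    by (simp add: prob_space.prob_space[OF prob_space_mu])
  ultimately have decay:
    "\<bar>(P ^^ (j * N\<^sub>D)) (\<lambda>x. h (x 0)) x\<bar> \<le> (exp (real N\<^sub>m\<^sub>i\<^sub>x * \<Phi> + E\<^sub>D * \<alpha>) + 1) * c * q ^ j"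
    if "x \<in> X" for j x
    using log_regular_transfer_power_decay[OF F _ that, of j] that
    by (simp add: F_def transfer_power_add transfer_power_const algebra_simps)
  have "0 \<le> (exp (real N\<^sub>m\<^sub>i\<^sub>x * \<Phi> + E\<^sub>D * \<alpha>) + 1) * c" using h_le[of undefined] by simp
  note interpolated = transfer_power_decay_interpolate[OF N_D(2) q this decay]
  moreover have "0 < root N\<^sub>D q" using q N_D(2) by (simp add: real_root_gt_zero)
  moreover have "root N\<^sub>D q < 1" using real_root_less_mono[OF N_D(2), of q 1] q N_D(2) by simp
  moreover have "0 \<le> (exp (real N\<^sub>m\<^sub>i\<^sub>x * \<Phi> + E\<^sub>D * \<alpha>) + 1) * c / q"
    using \<open>0 \<le> (exp (real N\<^sub>m\<^sub>i\<^sub>x * \<Phi> + E\<^sub>D * \<alpha>) + 1) * c\<close> q by simp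
  ultimately show ?thesis by blast
qed

definition cylinder_regular :: "real \<Rightarrow> nat \<Rightarrow> ((nat \<Rightarrow> 'a) \<Rightarrow> real) \<Rightarrow> bool" where
  "cylinder_regular c M H \<longleftrightarrow> (\<forall>y\<in>X. \<forall>z\<in>X. same_cylinder M y z \<longrightarrow>
     \<bar>H y\<bar> \<le> \<bar>H z\<bar> * exp (c * (1 / \<theta>) ^ M * dtheta \<theta> y z))"

lemma cylinder_regular_bounded_measurable:
  assumes "0 \<le> c" "cylinder_regular c M H" "H \<in> borel_measurable \<mu>"
  shows "bounded_measurable (\<lambda>y. \<bar>H y\<bar>)"
proof -
  define rep where "rep w = (SOME z. z \<in> X \<and> (\<forall>k\<le>M. z k = w k))" for w :: "nat \<Rightarrow> 'a"
  define R where "R = rep ` ({..M} \<rightarrow>\<^sub>E UNIV)"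
  have "finite R" unfolding R_def by (intro finite_imageI finite_PiE) auto
  have "\<bar>H y\<bar> \<le> exp (c * (1 / \<theta>) ^ M) * (\<Sum>w\<in>R. \<bar>H w\<bar>)" if y: "y \<in> X" for y
  proof -
    define z where "z = rep (restrict y {..M})"
    have z: "z \<in> X" "same_cylinder M y z"
      using someI[of "\<lambda>z. z \<in> X \<and> (\<forall>k\<le>M. z k = restrict y {..M} k)" y] y
      by (auto simp: z_def rep_def same_cylinder_def)
    have "restrict y {..M} \<in> {..M} \<rightarrow>\<^sub>E UNIV" by simp
    then have "z \<in> R" unfolding R_def z_def by (rule imageI)
    have "dtheta \<theta> y z \<le> 1" using dtheta_le_power[of \<theta> 0 y z] theta by simp
    then have "c * (1 / \<theta>) ^ M * dtheta \<theta> y z \<le> c * (1 / \<theta>) ^ M"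
      using assms(1) theta by (intro mult_left_le) auto
    then have "\<bar>H z\<bar> * exp (c * (1 / \<theta>) ^ M * dtheta \<theta> y z) \<le> \<bar>H z\<bar> * exp (c * (1 / \<theta>) ^ M)"
      by (intro mult_left_mono) auto
    moreover have "\<bar>H y\<bar> \<le> \<bar>H z\<bar> * exp (c * (1 / \<theta>) ^ M * dtheta \<theta> y z)"
      using assms(2) y z unfolding cylinder_regular_def by blast
    ultimately have "\<bar>H y\<bar> \<le> \<bar>H z\<bar> * exp (c * (1 / \<theta>) ^ M)" by linarith
    also have "\<dots> \<le> (\<Sum>w\<in>R. \<bar>H w\<bar>) * exp (c * (1 / \<theta>) ^ M)"
      using \<open>z \<in> R\<close> \<open>finite R\<close> by (intro mult_right_mono member_le_sum) auto
    finally show ?thesis by (simp add: mult.commute)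
  qed
  then show ?thesis using assms(3) unfolding bounded_measurable_def by auto
qed

lemma cylinder_regular_log_regular:
  assumes "0 \<le> c" "cylinder_regular c M H"
  shows "log_regular (\<lambda>y. \<bar>H y\<bar>) (c / \<alpha> ^ M) (Suc M)"
  unfolding log_regular_def
proof (intro conjI ballI allI impI)
  fix r y z assume r: "Suc M \<le> r" and y: "y \<in> X" and z: "z \<in> X" and agree: "\<forall>i<r. y i = z i"
  have r_eq: "r = M + (r - M)" using r by simp
  have "c * (1 / \<theta>) ^ M * dtheta \<theta> y z \<le> c * (1 / \<theta>) ^ M * \<theta> ^ r"
    using dtheta_le_power[of \<theta> r y z] theta agree assms(1) by (intro mult_left_mono) auto
  also have "\<dots> = c * \<theta> ^ (r - M)" using theta by (subst r_eq) (simp add: power_add field_simps)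
  also have "\<dots> \<le> c * \<alpha> ^ (r - M)" using assms(1) theta alpha by (intro mult_left_mono power_mono) auto
  also have "\<dots> = c / \<alpha> ^ M * \<alpha> ^ r" using alpha by (subst (2) r_eq) (simp add: power_add field_simps)
  finally have "\<bar>H z\<bar> * exp (c * (1 / \<theta>) ^ M * dtheta \<theta> y z) \<le> \<bar>H z\<bar> * exp (c / \<alpha> ^ M * \<alpha> ^ r)"
    by (intro mult_left_mono) auto
  moreover have "same_cylinder M y z" using agree r by (simp add: same_cylinder_def)
  then have "\<bar>H y\<bar> \<le> \<bar>H z\<bar> * exp (c * (1 / \<theta>) ^ M * dtheta \<theta> y z)"
    using assms(2) y z unfolding cylinder_regular_def by blast
  ultimately show "\<bar>H y\<bar> \<le> \<bar>H z\<bar> * exp (c / \<alpha> ^ M * \<alpha> ^ r)" by linarith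
qed simp

lemma transfer_power_cylinder_regular_le_integral:
  assumes "0 \<le> c" "cylinder_regular c M H" "H \<in> borel_measurable \<mu>" "x \<in> X"
  shows "(P ^^ M) (\<lambda>y. \<bar>H y\<bar>) x \<le> exp (real N\<^sub>m\<^sub>i\<^sub>x * \<Phi> + (c + D) * \<alpha>) * integral\<^sup>L \<mu> (\<lambda>y. \<bar>H y\<bar>)"
proof -
  have H: "bounded_measurable (\<lambda>y. \<bar>H y\<bar>)" by (rule cylinder_regular_bounded_measurable[OF assms(1-3)])
  have "log_regular ((P ^^ M) (\<lambda>y. \<bar>H y\<bar>)) (\<alpha> ^ M * (c / \<alpha> ^ M) + D) 1"
    using cylinder_regular_log_regular[OF assms(1,2)] by (intro log_regular_transfer_power) simp_all
  moreover have "\<alpha> ^ M * (c / \<alpha> ^ M) + D = c + D" using alpha by simp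
  ultimately show ?thesis
    using log_regular_le_integral[OF _ bounded_measurable_transfer_power[OF H] assms(4)]
      integral_transfer_power[OF H] by simp
qed

end

lemma sft_equilibrium_exists:
  fixes A :: "'a::finite \<Rightarrow> 'a \<Rightarrow> bool"
  assumes "topologically_mixing_sft A" "0 < \<theta>" "\<theta> < 1" "holder_potential A \<theta> \<phi>"
    "normalized_potential A \<phi>" "equilibrium_state A \<phi> \<mu>"
  shows "\<exists>C \<beta>. sft_equilibrium A \<phi> \<theta> C \<beta> \<mu>"
proof -
  obtain C \<beta> where "\<beta> > 0"
    and holder: "\<forall>y\<in>sft A. \<forall>z\<in>sft A. \<bar>\<phi> y - \<phi> z\<bar> \<le> C * dtheta \<theta> y z powr \<beta>"
    using assms(4) unfolding holder_potential_def by blast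
  have "\<bar>\<phi> y - \<phi> z\<bar> \<le> max C 0 * dtheta \<theta> y z powr min \<beta> 1"
    if "y \<in> sft A" "z \<in> sft A" for y z
  proof -
    have "0 \<le> dtheta \<theta> y z" "dtheta \<theta> y z \<le> 1"
      using dtheta_nonneg[of \<theta> y z] dtheta_le_power[of \<theta> 0 y z] assms(2,3) by auto
    then have "dtheta \<theta> y z powr \<beta> \<le> dtheta \<theta> y z powr min \<beta> 1"
      by (intro powr_mono') auto
    then show ?thesis using holder that
      by (smt (verit) mult_right_mono mult_left_mono powr_ge_zero)
  qed
  then have "sft_equilibrium A \<phi> \<theta> (max C 0) (min \<beta> 1) \<mu>"
    using assms \<open>\<beta> > 0\<close> by unfold_locales auto
  then show ?thesis by blast
qed

section \<open>Coboundary and large deviations\<close>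

locale decaying_observable = sft_equilibrium A \<phi> \<theta> C\<^sub>\<phi> \<beta> \<mu>
  for A :: "'a::finite \<Rightarrow> 'a \<Rightarrow> bool" and \<phi> \<theta> C\<^sub>\<phi> \<beta> \<mu> +
  fixes h :: "'a \<Rightarrow> int" and C\<^sub>h \<rho> :: real
  assumes rho: "0 < \<rho>" "\<rho> < 1" and decay_const: "0 \<le> C\<^sub>h"
    and decay: "\<And>n x. x \<in> sft A \<Longrightarrow>
      \<bar>(transfer A \<phi> ^^ n) (\<lambda>x. real_of_int (h (x 0))) x\<bar> \<le> C\<^sub>h * \<rho> ^ n"
begin

definition "obs = (\<lambda>x. real_of_int (h (x 0)))"
definition "B\<^sub>h = (\<Sum>a\<in>UNIV. \<bar>real_of_int (h a)\<bar>)"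
definition "U = C\<^sub>h / (1 - \<rho>)"
definition "B = B\<^sub>h + 2 * U + 1"

text \<open>\<open>cob k\<close> truncates the solution \<open>\<Sum>n. P ^^ Suc n obs\<close> of the cohomological equation, so that
  \<open>P (g k) = P ^^ Suc k obs\<close> is exponentially small: \<open>g k\<close> is almost a reverse martingale difference.\<close>
definition "cob k x = (\<Sum>n<k. (P ^^ Suc n) obs x)"
definition "g k x = obs x + cob k x - cob k (shift x)"
definition "gsum k j y = (\<Sum>i<j. g k ((shift ^^ i) y))"
definition "twisted k t F = (\<lambda>x. P (\<lambda>y. exp (t * g k y) * F y) x)"
definition "\<Lambda> k t = exp (t * C\<^sub>h * \<rho> ^ Suc k + t\<^sup>2 * B\<^sup>2)"

lemma decay_obs: "x \<in> X \<Longrightarrow> \<bar>(P ^^ n) obs x\<bar> \<le> C\<^sub>h * \<rho> ^ n"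
  unfolding obs_def by (rule decay)

lemma U_nonneg: "0 \<le> U"
  using decay_const rho by (simp add: U_def)

lemma B_ge_1: "1 \<le> B"
  using U_nonneg by (simp add: B_def B\<^sub>h_def sum_nonneg)

lemma twist_bound_ge_1: "0 \<le> t \<Longrightarrow> 1 \<le> \<Lambda> k t"
  using decay_const rho by (simp add: \<Lambda>_def)

lemma cob_bound: "x \<in> X \<Longrightarrow> \<bar>cob k x\<bar> \<le> U"
proof -
  assume x: "x \<in> X"
  have "\<bar>cob k x\<bar> \<le> (\<Sum>n<k. \<bar>(P ^^ Suc n) obs x\<bar>)" unfolding cob_def by (rule sum_abs)
  also have "\<dots> \<le> (\<Sum>n<k. C\<^sub>h * \<rho> ^ n)"
  proof (rule sum_mono)
    fix n
    have "\<bar>(P ^^ Suc n) obs x\<bar> \<le> C\<^sub>h * \<rho> ^ Suc n" by (rule decay_obs[OF x])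
    also have "\<dots> \<le> C\<^sub>h * \<rho> ^ n" using decay_const rho by (intro mult_left_mono power_decreasing) auto
    finally show "\<bar>(P ^^ Suc n) obs x\<bar> \<le> C\<^sub>h * \<rho> ^ n" .
  qed
  also have "\<dots> = C\<^sub>h * (1 - \<rho> ^ k) / (1 - \<rho>)"
    using rho by (simp add: sum_distrib_left[symmetric] sum_gp_strict)
  also have "\<dots> \<le> U" unfolding U_def using decay_const rho
    by (intro divide_right_mono) (auto intro!: mult_left_le)
  finally show ?thesis .
qed

lemma g_bound: "x \<in> X \<Longrightarrow> \<bar>g k x\<bar> \<le> B"
proof -
  assume x: "x \<in> X"
  have "\<bar>obs x\<bar> \<le> B\<^sub>h" unfolding obs_def B\<^sub>h_def by (rule member_le_sum) auto
  then show ?thesis using cob_bound[OF x, of k] cob_bound[OF sft_shift[OF x], of k]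
    unfolding g_def B_def by linarith
qed

lemma transfer_g: "x \<in> X \<Longrightarrow> P (g k) x = (P ^^ Suc k) obs x"
proof -
  assume x: "x \<in> X"
  have "P (\<lambda>y. cob k (shift y)) x = cob k x"
    using transfer_mult_shift[of "\<lambda>_. 1" "cob k" x] transfer_const[OF x, of 1] by simp
  moreover have "P obs x + P (cob k) x = (P ^^ Suc 0) obs x + (\<Sum>n<k. (P ^^ Suc (Suc n)) obs x)"
    unfolding cob_def transfer_sum by simp
  then have "P obs x + P (cob k) x = (\<Sum>n<Suc k. (P ^^ Suc n) obs x)"
    by (simp only: sum.lessThan_Suc_shift)
  ultimately have "P (g k) x = (\<Sum>n<Suc k. (P ^^ Suc n) obs x) - cob k x"
    unfolding g_def transfer_diff transfer_add by simp
  then show ?thesis by (simp add: cob_def)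
qed

lemma transfer_exp_g_le:
  assumes x: "x \<in> X" and t: "0 \<le> t" "t * B \<le> 1"
  shows "P (\<lambda>y. exp (t * g k y)) x \<le> \<Lambda> k t"
proof -
  have tg: "\<bar>t * g k y\<bar> \<le> t * B" if "y \<in> X" for y
    using g_bound[OF that, of k] t by (simp add: abs_mult mult_left_mono)
  then have sq: "(t * g k y)\<^sup>2 \<le> t\<^sup>2 * B\<^sup>2" if "y \<in> X" for y
    using power_mono[OF tg[OF that], of 2] by (simp add: power_mult_distrib)
  have "P (\<lambda>y. exp (t * g k y)) x \<le> P (\<lambda>y. 1 + t * g k y + (t * g k y)\<^sup>2) x"
    using tg t by (intro transfer_mono exp_le_one_plus_self_plus_square) (meson order_trans)
  also have "\<dots> = 1 + t * P (g k) x + P (\<lambda>y. (t * g k y)\<^sup>2) x"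
    by (simp add: transfer_add transfer_cmult transfer_const[OF x])
  also have "P (\<lambda>y. (t * g k y)\<^sup>2) x \<le> t\<^sup>2 * B\<^sup>2"
    using transfer_mono[of "\<lambda>y. (t * g k y)\<^sup>2" "\<lambda>_. t\<^sup>2 * B\<^sup>2" x] sq transfer_const[OF x] by simp
  also have "t * P (g k) x \<le> t * (C\<^sub>h * \<rho> ^ Suc k)"
    using transfer_g[OF x, of k] decay_obs[OF x, of "Suc k"] t by (intro mult_left_mono) auto
  also have "1 + t * (C\<^sub>h * \<rho> ^ Suc k) + t\<^sup>2 * B\<^sup>2 \<le> \<Lambda> k t"
    unfolding \<Lambda>_def using exp_ge_add_one_self[of "t * C\<^sub>h * \<rho> ^ Suc k + t\<^sup>2 * B\<^sup>2"]
    by (simp add: algebra_simps)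
  finally show ?thesis by simp
qed

lemma twisted_power_eq: "(twisted k t ^^ j) F = (P ^^ j) (\<lambda>y. exp (t * gsum k j y) * F y)"
proof (induction j)
  case (Suc j)
  have "(P ^^ Suc j) (\<lambda>y. exp (t * gsum k (Suc j) y) * F y)
      = P ((P ^^ j) (\<lambda>y. (exp (t * gsum k j y) * F y) * (\<lambda>z. exp (t * g k z)) ((shift ^^ j) y)))"
    by (simp add: gsum_def distrib_left exp_add algebra_simps)
  also have "\<dots> = P (\<lambda>x. exp (t * g k x) * (P ^^ j) (\<lambda>y. exp (t * gsum k j y) * F y) x)"
    using transfer_power_mult_shift[of j "\<lambda>y. exp (t * gsum k j y) * F y" "\<lambda>z. exp (t * g k z)"]
    by simp
  also have "\<dots> = twisted k t ((twisted k t ^^ j) F)" unfolding Suc.IH twisted_def ..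
  finally show ?case by simp
qed (simp add: gsum_def)

lemma twisted_power_le:
  assumes t: "0 \<le> t" "t * B \<le> 1" and F: "\<And>y. y \<in> X \<Longrightarrow> 0 \<le> F y \<and> F y \<le> S" and x: "x \<in> X"
  shows "0 \<le> (twisted k t ^^ n) F x \<and> (twisted k t ^^ n) F x \<le> S * \<Lambda> k t ^ n"
  using x
proof (induction n arbitrary: x)
  case (Suc n)
  define G where "G = (twisted k t ^^ n) F"
  have G: "\<And>y. y \<in> X \<Longrightarrow> 0 \<le> G y \<and> G y \<le> S * \<Lambda> k t ^ n" using Suc.IH unfolding G_def by blast
  then have S: "0 \<le> S * \<Lambda> k t ^ n" using Suc.prems by (meson order_trans)
  have "(twisted k t ^^ Suc n) F x = P (\<lambda>y. exp (t * g k y) * G y) x" by (simp add: G_def twisted_def)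
  moreover have "0 \<le> P (\<lambda>y. exp (t * g k y) * G y) x" using G by (intro transfer_nonneg) simp
  moreover have "P (\<lambda>y. exp (t * g k y) * G y) x \<le> P (\<lambda>y. (S * \<Lambda> k t ^ n) * exp (t * g k y)) x"
    using G by (intro transfer_mono) (simp add: mult.commute mult_left_mono)
  moreover have "P (\<lambda>y. (S * \<Lambda> k t ^ n) * exp (t * g k y)) x \<le> (S * \<Lambda> k t ^ n) * \<Lambda> k t"
    unfolding transfer_cmult using transfer_exp_g_le[OF Suc.prems t] S by (intro mult_left_mono)
  ultimately show ?case by (simp add: algebra_simps)
qed (use F in simp)

lemma twisted_power_le_transfer_power:
  assumes t: "0 \<le> t" and F: "\<And>y. y \<in> X \<Longrightarrow> 0 \<le> F y" and x: "x \<in> X"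
  shows "(twisted k t ^^ n) F x \<le> exp (t * B) ^ n * (P ^^ n) F x"
  using x
proof (induction n arbitrary: x)
  case (Suc n)
  have "(twisted k t ^^ Suc n) F x = P (\<lambda>y. exp (t * g k y) * (twisted k t ^^ n) F y) x"
    by (simp add: twisted_def)
  also have "\<dots> \<le> P (\<lambda>y. exp (t * B) * (exp (t * B) ^ n * (P ^^ n) F y)) x"
  proof (rule transfer_mono)
    fix y assume y: "y \<in> X"
    have "exp (t * g k y) \<le> exp (t * B)" using g_bound[OF y, of k] t by (auto intro: mult_left_mono)
    moreover have "0 \<le> (twisted k t ^^ n) F y"
      unfolding twisted_power_eq using F y by (intro transfer_power_nonneg) auto
    ultimately show "exp (t * g k y) * (twisted k t ^^ n) F y \<le> exp (t * B) * (exp (t * B) ^ n * (P ^^ n) F y)"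
      using Suc.IH[OF y] by (intro mult_mono) auto
  qed
  also have "\<dots> = exp (t * B) ^ Suc n * (P ^^ Suc n) F x" by (simp add: transfer_cmult)
  finally show ?case .
qed simp

text \<open>Only the first \<open>m\<close> steps see \<open>F\<close> itself; afterwards only the supremum of \<open>P ^^ m F\<close> matters.\<close>
lemma twisted_power_le_sup_transfer_power:
  assumes t: "0 \<le> t" "t * B \<le> 1" and "m \<le> n" and F: "\<And>y. y \<in> X \<Longrightarrow> 0 \<le> F y"
    and S: "\<And>y. y \<in> X \<Longrightarrow> (P ^^ m) F y \<le> S" and x: "x \<in> X"
  shows "(twisted k t ^^ n) F x \<le> exp (t * B) ^ m * \<Lambda> k t ^ n * S"
proof -
  define G where "G = (twisted k t ^^ m) F"
  have G: "0 \<le> G y \<and> G y \<le> exp (t * B) ^ m * S" if "y \<in> X" for y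
  proof
    show "0 \<le> G y" unfolding G_def twisted_power_eq using F that by (intro transfer_power_nonneg) auto
    have "G y \<le> exp (t * B) ^ m * (P ^^ m) F y"
      unfolding G_def by (rule twisted_power_le_transfer_power[OF t(1) F that])
    also have "\<dots> \<le> exp (t * B) ^ m * S" using S[OF that] by (intro mult_left_mono) auto
    finally show "G y \<le> exp (t * B) ^ m * S" .
  qed
  have "n = (n - m) + m" using \<open>m \<le> n\<close> by simp
  then have "(twisted k t ^^ n) F = (twisted k t ^^ (n - m)) G"
    unfolding G_def by (metis funpow_add comp_apply)
  then have "(twisted k t ^^ n) F x \<le> exp (t * B) ^ m * S * \<Lambda> k t ^ (n - m)"
    using twisted_power_le[OF t G x] by simp
  also have "\<dots> \<le> exp (t * B) ^ m * S * \<Lambda> k t ^ n"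
    using G[OF x] twist_bound_ge_1[OF t(1)] by (intro mult_left_mono power_increasing) auto
  finally show ?thesis by (simp add: algebra_simps)
qed

lemma twist_bound_power_le:
  assumes u: "0 < u" "u \<le> 1" and k: "1 \<le> k"
  shows "\<Lambda> k (u / sqrt k) ^ k \<le> exp (C\<^sub>h * \<rho> / (1 - \<rho>) + B\<^sup>2)"
proof -
  define t where "t = u / sqrt k"
  have sk: "1 \<le> sqrt k" "sqrt k * sqrt k = real k" using k by auto
  have "real k * t\<^sup>2 = u\<^sup>2" using k by (simp add: t_def power_divide)
  also have "\<dots> \<le> 1" using u by (simp add: power_le_one)
  finally have quadratic: "real k * t\<^sup>2 * B\<^sup>2 \<le> B\<^sup>2" by (simp add: mult_left_le_one_le)
  have "real k * t = real k / sqrt k * u" by (simp add: t_def)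
  also have "\<dots> = sqrt k * u" by (simp add: real_div_sqrt)
  also have "\<dots> \<le> sqrt k * sqrt k" by (intro mult_left_mono) (use sk(1) u in linarith)+
  also have "\<dots> = real k" by (rule sk(2))
  finally have "real k * t * \<rho> ^ Suc k \<le> real k * \<rho> ^ k"
    using rho by (intro mult_mono power_decreasing) auto
  also have "\<dots> \<le> \<rho> / (1 - \<rho>)" by (rule real_mult_power_le[OF rho])
  finally have linear: "C\<^sub>h * (real k * t * \<rho> ^ Suc k) \<le> C\<^sub>h * (\<rho> / (1 - \<rho>))"
    using decay_const by (intro mult_left_mono)
  have "\<Lambda> k t ^ k = exp (real k * (t * C\<^sub>h * \<rho> ^ Suc k + t\<^sup>2 * B\<^sup>2))"
    unfolding \<Lambda>_def by (rule exp_of_nat_mult[symmetric])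
  also have "real k * (t * C\<^sub>h * \<rho> ^ Suc k + t\<^sup>2 * B\<^sup>2)
      = C\<^sub>h * (real k * t * \<rho> ^ Suc k) + real k * t\<^sup>2 * B\<^sup>2"
    by (simp only: algebra_simps)
  finally show ?thesis using linear quadratic by (simp add: t_def)
qed

lemma birkhoff_le_gsum:
  assumes y: "y \<in> X"
  shows "real_of_int (birkhoff (\<lambda>x. h (x 0)) k y) \<le> gsum k k y + 2 * U"
proof -
  have "gsum k k y = (\<Sum>j<k. obs ((shift ^^ j) y)) + (\<Sum>j<k. cob k ((shift ^^ j) y) - cob k ((shift ^^ Suc j) y))"
    unfolding gsum_def g_def sum.distrib[symmetric] by (simp add: algebra_simps)
  also have "(\<Sum>j<k. cob k ((shift ^^ j) y) - cob k ((shift ^^ Suc j) y)) = cob k y - cob k ((shift ^^ k) y)"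
    using sum_lessThan_telescope'[of "\<lambda>j. cob k ((shift ^^ j) y)" k] by simp
  finally show ?thesis using cob_bound[OF y, of k] cob_bound[OF sft_funpow_shift[OF y], of k k]
    by (simp add: birkhoff_def obs_def abs_le_iff)
qed

text \<open>Exponential Chebyshev inequality; the coboundary costs the factor \<open>exp (2 * t * U)\<close>.\<close>
lemma transfer_power_indicator_le:
  assumes t: "0 \<le> t" and x: "x \<in> X"
  shows "(P ^^ k) (\<lambda>y. (if real_of_int (birkhoff (\<lambda>x. h (x 0)) k y) \<ge> L then 1 else 0) * H y) x
    \<le> exp (t * (2 * U - L)) * (twisted k t ^^ k) (\<lambda>y. \<bar>H y\<bar>) x"
proof -
  have "(if real_of_int (birkhoff (\<lambda>x. h (x 0)) k y) \<ge> L then 1 else 0) * H y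
      \<le> exp (t * (2 * U - L)) * (exp (t * gsum k k y) * \<bar>H y\<bar>)" if y: "y \<in> X" for y
  proof -
    define S where "S = real_of_int (birkhoff (\<lambda>x. h (x 0)) k y)"
    have "S - L \<le> (2 * U - L) + gsum k k y" using birkhoff_le_gsum[OF y, of k] by (simp add: S_def)
    then have "t * (S - L) \<le> t * ((2 * U - L) + gsum k k y)" using t by (rule mult_left_mono)
    then have "t * (S - L) \<le> t * (2 * U - L) + t * gsum k k y" by (simp only: distrib_left)
    then have "exp (t * (S - L)) \<le> exp (t * (2 * U - L)) * exp (t * gsum k k y)"
      by (simp add: exp_add[symmetric])
    then have "exp (t * (S - L)) * \<bar>H y\<bar> \<le> exp (t * (2 * U - L)) * (exp (t * gsum k k y) * \<bar>H y\<bar>)"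
      by (simp add: mult.assoc[symmetric] mult_right_mono)
    moreover have "(if S \<ge> L then 1 else 0) * H y \<le> exp (t * (S - L)) * \<bar>H y\<bar>"
    proof (cases "S \<ge> L")
      case True
      then have "1 \<le> exp (t * (S - L))" using t by simp
      then show ?thesis using True by (simp add: order_trans[OF abs_ge_self] mult_le_cancel_right1)
    qed simp
    ultimately show ?thesis unfolding S_def by linarith
  qed
  then have "(P ^^ k) (\<lambda>y. (if real_of_int (birkhoff (\<lambda>x. h (x 0)) k y) \<ge> L then 1 else 0) * H y) x
      \<le> (P ^^ k) (\<lambda>y. exp (t * (2 * U - L)) * (exp (t * gsum k k y) * \<bar>H y\<bar>)) x"
    by (rule transfer_power_mono[OF _ x])
  then show ?thesis by (simp add: transfer_power_cmult twisted_power_eq)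
qed

lemma twisting_cost_le:
  assumes u: "0 < u" "u \<le> 1" and k: "1 \<le> k" and M: "real M \<le> sqrt k"
  shows "exp (u / sqrt k * (2 * U)) * exp (u / sqrt k * B) ^ M * \<Lambda> k (u / sqrt k) ^ k
    \<le> exp (2 * U) * exp B * exp (C\<^sub>h * \<rho> / (1 - \<rho>) + B\<^sup>2)"
proof -
  define t where "t = u / sqrt k"
  have "1 \<le> sqrt k" using k by simp
  then have "sqrt k * t = u" by (simp add: t_def)
  have "u / sqrt k \<le> u / 1" using u \<open>1 \<le> sqrt k\<close> by (intro divide_left_mono) auto
  then have t: "0 \<le> t" "t \<le> 1" using u by (simp_all add: t_def)
  have "t * (2 * U) \<le> 1 * (2 * U)" using t U_nonneg by (intro mult_right_mono) auto
  then have "exp (t * (2 * U)) \<le> exp (2 * U)" by simp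
  moreover have "real M * t \<le> sqrt k * t" using M t by (intro mult_right_mono) auto
  then have "real M * t * B \<le> 1 * B" using \<open>sqrt k * t = u\<close> u B_ge_1 by (intro mult_right_mono) auto
  then have "exp (t * B) ^ M \<le> exp B" by (simp add: exp_of_nat_mult[symmetric] mult.assoc)
  moreover have "\<Lambda> k t ^ k \<le> exp (C\<^sub>h * \<rho> / (1 - \<rho>) + B\<^sup>2)"
    unfolding t_def by (rule twist_bound_power_le[OF u k])
  ultimately show ?thesis unfolding t_def[symmetric] by (intro mult_mono) (auto simp: \<Lambda>_def)
qed

definition "deviation_const c =
  exp (2 * U) * exp B * exp (C\<^sub>h * \<rho> / (1 - \<rho>) + B\<^sup>2) * exp (real N\<^sub>m\<^sub>i\<^sub>x * \<Phi> + (c + D) * \<alpha>)"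

lemma deviation_const_gt_1:
  assumes "0 \<le> c"
  shows "1 < deviation_const c"
proof -
  have "0 \<le> C\<^sub>h * \<rho> / (1 - \<rho>)" "0 \<le> real N\<^sub>m\<^sub>i\<^sub>x * \<Phi>" "0 \<le> (c + D) * \<alpha>" "0 \<le> B\<^sup>2"
    using decay_const rho Phi_nonneg assms D_nonneg alpha by simp_all
  then have "0 < 2 * U + B + (C\<^sub>h * \<rho> / (1 - \<rho>) + B\<^sup>2) + (real N\<^sub>m\<^sub>i\<^sub>x * \<Phi> + (c + D) * \<alpha>)"
    using U_nonneg B_ge_1 by linarith
  then show ?thesis by (simp add: deviation_const_def mult_exp_exp)
qed

lemma large_deviation_bound:
  assumes c: "0 \<le> c" and u: "0 < u" "u * B \<le> 1" and M: "1 \<le> M" "M\<^sup>2 \<le> k"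
    and H: "H \<in> borel_measurable \<mu>" "cylinder_regular c M H" and x: "x \<in> X"
  shows "(P ^^ k) (\<lambda>y. (if real_of_int (birkhoff (\<lambda>x. h (x 0)) k y) \<ge> L then 1 else 0) * H y) x
    \<le> deviation_const c * exp (- (u * L / sqrt (real k))) * integral\<^sup>L \<mu> (\<lambda>y. \<bar>H y\<bar>)"
proof -
  define t where "t = u / sqrt k"
  define I where "I = integral\<^sup>L \<mu> (\<lambda>y. \<bar>H y\<bar>)"
  define K\<^sub>H where "K\<^sub>H = exp (real N\<^sub>m\<^sub>i\<^sub>x * \<Phi> + (c + D) * \<alpha>)"
  have "M \<le> M\<^sup>2" by (simp add: power2_eq_square)
  then have k: "M \<le> k" "1 \<le> k" using M by linarith+
  have "real M = sqrt (real (M\<^sup>2))" by simp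
  also have "\<dots> \<le> sqrt k" using M(2) by (simp only: real_sqrt_le_iff of_nat_le_iff)
  finally have "real M \<le> sqrt k" .
  have "u * 1 \<le> u * B" using u B_ge_1 by (intro mult_left_mono) auto
  then have "u \<le> 1" using u(2) by linarith
  have "0 \<le> t" using u by (simp add: t_def)
  have "u * B / sqrt k \<le> u * B / 1" using u k B_ge_1 by (intro divide_left_mono) auto
  then have "t * B \<le> 1" using u by (simp add: t_def)
  have "0 \<le> I" unfolding I_def by simp
  have "t * (2 * U - L) = - (u * L / sqrt (real k)) + t * (2 * U)" by (simp add: t_def algebra_simps)
  then have exp_split: "exp (t * (2 * U - L)) = exp (- (u * L / sqrt (real k))) * exp (t * (2 * U))"
    by (simp only: exp_add)
  have "(P ^^ k) (\<lambda>y. (if real_of_int (birkhoff (\<lambda>x. h (x 0)) k y) \<ge> L then 1 else 0) * H y) x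
      \<le> exp (t * (2 * U - L)) * (twisted k t ^^ k) (\<lambda>y. \<bar>H y\<bar>) x"
    by (rule transfer_power_indicator_le[OF \<open>0 \<le> t\<close> x])
  also have "\<dots> \<le> exp (t * (2 * U - L)) * (exp (t * B) ^ M * \<Lambda> k t ^ k * (K\<^sub>H * I))"
    using transfer_power_cylinder_regular_le_integral[OF c H(2,1)] unfolding K\<^sub>H_def I_def
    by (intro mult_left_mono twisted_power_le_sup_transfer_power[OF \<open>0 \<le> t\<close> \<open>t * B \<le> 1\<close> k(1) _ _ x])
      auto
  also have "\<dots> = exp (- (u * L / sqrt (real k)))
      * ((exp (t * (2 * U)) * exp (t * B) ^ M * \<Lambda> k t ^ k) * (K\<^sub>H * I))"
    unfolding exp_split by (simp add: mult_ac)
  also have "\<dots> \<le> exp (- (u * L / sqrt (real k)))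
      * ((exp (2 * U) * exp B * exp (C\<^sub>h * \<rho> / (1 - \<rho>) + B\<^sup>2)) * (K\<^sub>H * I))"
    using twisting_cost_le[OF u(1) \<open>u \<le> 1\<close> k(2) \<open>real M \<le> sqrt k\<close>] \<open>0 \<le> I\<close>
    unfolding t_def by (intro mult_left_mono mult_right_mono) (auto simp: K\<^sub>H_def)
  finally show ?thesis by (simp add: deviation_const_def K\<^sub>H_def I_def mult_ac)
qed

end

theorem lemma4p4:
  fixes A :: "'a::finite \<Rightarrow> 'a \<Rightarrow> bool"
    and \<phi> :: "(nat \<Rightarrow> 'a) \<Rightarrow> real"
    and \<mu> :: "(nat \<Rightarrow> 'a) measure"
    and h0 :: "'a \<Rightarrow> int"
    and \<theta> c :: real
  assumes mixing: "topologically_mixing_sft A"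
    and theta: "0 < \<theta>" "\<theta> < 1"
    and holder: "holder_potential A \<theta> \<phi>"
    and normalized: "normalized_potential A \<phi>"
    and equilibrium: "equilibrium_state A \<phi> \<mu>"
    and centered: "integral\<^sup>L \<mu> (\<lambda>x. real_of_int (h0 (x 0))) = 0"
    and nonarith: "non_arithmetic \<mu> (\<lambda>x. h0 (x 0))"
    and c_pos: "c > 0"
  shows "\<exists>K>1. \<exists>u0>0. \<forall>u. 0 < u \<and> u < u0 \<longrightarrow>
           (\<forall>(L::real) (M::nat) (k::nat) (H :: (nat \<Rightarrow> 'a) \<Rightarrow> real).
              M \<ge> 1 \<longrightarrow> k \<ge> M\<^sup>2 \<longrightarrow> H \<in> borel_measurable \<mu> \<longrightarrow>
              (\<forall>y\<in>sft A. \<forall>z\<in>sft A. same_cylinder M y z \<longrightarrow>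
                  \<bar>H y\<bar> \<le> \<bar>H z\<bar> * exp (c * (1 / \<theta>) ^ M * dtheta \<theta> y z)) \<longrightarrow>
              (\<forall>x\<in>sft A.
                 (transfer A \<phi> ^^ k)
                   (\<lambda>y. (if real_of_int (birkhoff (\<lambda>x. h0 (x 0)) k y) \<ge> L then 1 else 0) * H y) x
                 \<le> K * exp (- (u * L / sqrt (real k))) * integral\<^sup>L \<mu> (\<lambda>y. \<bar>H y\<bar>)))"
proof -
  obtain C\<^sub>\<phi> \<beta> where equilibrium_instance: "sft_equilibrium A \<phi> \<theta> C\<^sub>\<phi> \<beta> \<mu>"
    using sft_equilibrium_exists[OF mixing theta holder normalized equilibrium] by blast
  then interpret sft_equilibrium A \<phi> \<theta> C\<^sub>\<phi> \<beta> \<mu> .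
  obtain C\<^sub>h \<rho> where "decaying_observable A \<phi> \<theta> C\<^sub>\<phi> \<beta> \<mu> h0 C\<^sub>h \<rho>"
    using transfer_power_decay_first_coordinate[of "\<lambda>a. real_of_int (h0 a)"] centered equilibrium_instance
    unfolding decaying_observable_def decaying_observable_axioms_def by blast
  then interpret decaying_observable A \<phi> \<theta> C\<^sub>\<phi> \<beta> \<mu> h0 C\<^sub>h \<rho> .
  show ?thesis
  proof (intro exI conjI allI impI ballI)
    show "1 < deviation_const c" "0 < 1 / B" using deviation_const_gt_1 c_pos B_ge_1 by auto
    fix u L M k H x
    assume u: "0 < u \<and> u < 1 / B" and M: "1 \<le> M" "M\<^sup>2 \<le> k"
      and H: "H \<in> borel_measurable \<mu>" and x: "x \<in> sft A"
      and H_regular: "\<forall>y\<in>sft A. \<forall>z\<in>sft A. same_cylinder M y z \<longrightarrow>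
        \<bar>H y\<bar> \<le> \<bar>H z\<bar> * exp (c * (1 / \<theta>) ^ M * dtheta \<theta> y z)"
    have "u * B \<le> 1" using u B_ge_1 by (simp add: pos_less_divide_eq)
    moreover have "cylinder_regular c M H" using H_regular by (simp add: cylinder_regular_def)
    ultimately show "(transfer A \<phi> ^^ k)
        (\<lambda>y. (if real_of_int (birkhoff (\<lambda>x. h0 (x 0)) k y) \<ge> L then 1 else 0) * H y) x
      \<le> deviation_const c * exp (- (u * L / sqrt (real k))) * integral\<^sup>L \<mu> (\<lambda>y. \<bar>H y\<bar>)"
      using large_deviation_bound[OF less_imp_le[OF c_pos] conjunct1[OF u] _ M H _ x] by blast
  qed
qed

end
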